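(* If two circuits $c,d:a\to b$ are both safe and are equal modulo $E$, then they are equal modulo $A$.
   Context: A circuit is a morphism of the free symmetric strict monoidal category whose objects are natural numbers (tensor = addition) generated by $\mathsf{discard}:1\to 0$, $\mathsf{copy}:1\to 2$, $\mathsf{zero}:0\to1$, $\mathsf{add}:2\to1$, $\mathsf{one}:0\to 1$, $\mathsf{and}:2\to 1$, considered up to the laws of symmetric monoidal categories. Composition is diagrammatic ($f;g$ = first $f$ then $g$), $\sigma$ is the symmetry $2\to2$, $\mathsf{copy}_n$, $\mathsf{discard}_n$ are the evident composites. $A$ is the set of equations: $\mathsf{copy};\sigma=\mathsf{copy}$; $\mathsf{copy};(\mathsf{copy}\otimes \mathrm{id}_1)=\mathsf{copy};(\mathrm{id}_1\otimes\mathsf{copy})$; $\mathsf{copy};(\mathsf{discard}\otimes\mathrm{id}_1)=\mathrm{id}_1$; for every circuit $f:a\to b$, $f;\mathsf{copy}_b=\mathsf{copy}_a;(f\otimes f)$ and $f;\mathsf{discard}_b=\mathsf{discard}_a$; commutativity, associativity and unit laws for $(\mathsf{add},\mathsf{zero})$ and for $(\mathsf{and},\mathsf{one})$; $\mathsf{copy};\mathsf{add}=\mathsf{discard};\mathsf{zero}$; and distributivity $(\mathrm{id}_1\otimes\mathsf{add});\mathsf{and}=(\mathsf{copy}\otimes\mathrm{id}_2);(\mathrm{id}_1\otimes\sigma\otimes\mathrm{id}_1);(\mathsf{and}\otimes\mathsf{and});\mathsf{add}$. $E$ is $A$ together with the idempotence equation $\mathsf{copy};\mathsf{and}=\mathrm{id}_1$.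 "Equal modulo $A$" (resp. $E$) means related by the smallest congruence (w.r.t. composition and tensor) containing $A$ (resp. $E$). View a circuit as a directed graph whose nodes are wires and whose edges go from each input wire of a generator occurrence to each of its output wires. A circuit $c$ is safe if for every occurrence of $\mathsf{and}$ in $c$, there is no input port of $c$ from which both input ports of that $\mathsf{and}$ are reachable by a forward path. *)

theory Defs
  imports Main
begin

datatype gen = Discard | Copy | Zero | Add | One | And

datatype circ = Gen gen | Id nat | Sym nat nat | Seq circ circ | Par circ circ

fun gdom :: "gen \<Rightarrow> nat" where
  "gdom Discard = 1" | "gdom Copy = 1" | "gdom Zero = 0"
| "gdom Add = 2" | "gdom One = 0" | "gdom And = 2"

fun gcod :: "gen \<Rightarrow> nat" where
  "gcod Discard = 0" | "gcod Copy = 2" | "gcod Zero = 1"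
| "gcod Add = 1" | "gcod One = 1" | "gcod And = 1"

fun dm :: "circ \<Rightarrow> nat" where
  "dm (Gen g) = gdom g" | "dm (Id n) = n" | "dm (Sym m n) = m + n"
| "dm (Seq f g) = dm f" | "dm (Par f g) = dm f + dm g"

fun cd :: "circ \<Rightarrow> nat" where
  "cd (Gen g) = gcod g" | "cd (Id n) = n" | "cd (Sym m n) = n + m"
| "cd (Seq f g) = cd g" | "cd (Par f g) = cd f + cd g"

fun wt :: "circ \<Rightarrow> bool" where
  "wt (Gen g) = True" | "wt (Id n) = True" | "wt (Sym m n) = True"
| "wt (Seq f g) = (wt f \<and> wt g \<and> cd f = dm g)"
| "wt (Par f g) = (wt f \<and> wt g)"

definition hasty :: "circ \<Rightarrow> nat \<Rightarrow> nat \<Rightarrow> bool" where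
  "hasty c a b \<longleftrightarrow> wt c \<and> dm c = a \<and> cd c = b"

text \<open>Evident composites: copy_n : n -> 2n (outputs x1..xn x1..xn), discard_n : n -> 0.\<close>
fun copyn :: "nat \<Rightarrow> circ" where
  "copyn 0 = Id 0"
| "copyn (Suc n) = Seq (Par (Gen Copy) (copyn n)) (Par (Id 1) (Par (Sym 1 n) (Id n)))"

fun discardn :: "nat \<Rightarrow> circ" where
  "discardn 0 = Id 0"
| "discardn (Suc n) = Par (Gen Discard) (discardn n)"

abbreviation copy where "copy \<equiv> Gen Copy"
abbreviation discard where "discard \<equiv> Gen Discard"
abbreviation zero where "zero \<equiv> Gen Zero"
abbreviation one where "one \<equiv> Gen One"
abbreviation add where "add \<equiv> Gen Add"
abbreviation andg where "andg \<equiv> Gen And"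
abbreviation sigma where "sigma \<equiv> Sym 1 1"

inductive smc_law :: "circ \<Rightarrow> circ \<Rightarrow> bool" where
  seq_assoc: "smc_law (Seq (Seq f g) h) (Seq f (Seq g h))"
| seq_idl: "smc_law (Seq (Id (dm f)) f) f"
| seq_idr: "smc_law (Seq f (Id (cd f))) f"
| par_assoc: "smc_law (Par (Par f g) h) (Par f (Par g h))"
| par_unitl: "smc_law (Par (Id 0) f) f"
| par_unitr: "smc_law (Par f (Id 0)) f"
| par_id: "smc_law (Par (Id m) (Id n)) (Id (m + n))"
| interchange: "smc_law (Par (Seq f g) (Seq h k)) (Seq (Par f h) (Par g k))"
| sym_nat: "smc_law (Seq (Par f g) (Sym (cd f) (cd g))) (Seq (Sym (dm f) (dm g)) (Par g f))"
| sym_inv: "smc_law (Seq (Sym m n) (Sym n m)) (Id (m + n))"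
| sym_hex1: "smc_law (Sym (m + n) p) (Seq (Par (Id m) (Sym n p)) (Par (Sym m p) (Id n)))"
| sym_hex2: "smc_law (Sym m (n + p)) (Seq (Par (Sym m n) (Id p)) (Par (Id n) (Sym m p)))"
| sym_unitl: "smc_law (Sym 0 m) (Id m)"
| sym_unitr: "smc_law (Sym m 0) (Id m)"

inductive eqv :: "(circ \<Rightarrow> circ \<Rightarrow> bool) \<Rightarrow> circ \<Rightarrow> circ \<Rightarrow> bool" for ax where
  ax: "ax c d \<Longrightarrow> hasty c a b \<Longrightarrow> hasty d a b \<Longrightarrow> eqv ax c d"
| smc: "smc_law c d \<Longrightarrow> hasty c a b \<Longrightarrow> hasty d a b \<Longrightarrow> eqv ax c d"
| refl: "wt c \<Longrightarrow> eqv ax c c"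
| sym: "eqv ax c d \<Longrightarrow> eqv ax d c"
| trans: "eqv ax c d \<Longrightarrow> eqv ax d e \<Longrightarrow> eqv ax c e"
| seq: "eqv ax f f' \<Longrightarrow> eqv ax g g' \<Longrightarrow> cd f = dm g \<Longrightarrow> eqv ax (Seq f g) (Seq f' g')"
| par: "eqv ax f f' \<Longrightarrow> eqv ax g g' \<Longrightarrow> eqv ax (Par f g) (Par f' g')"

inductive axA :: "circ \<Rightarrow> circ \<Rightarrow> bool" where
  copy_comm: "axA (Seq copy sigma) copy"
| copy_assoc: "axA (Seq copy (Par copy (Id 1))) (Seq copy (Par (Id 1) copy))"
| copy_unit: "axA (Seq copy (Par discard (Id 1))) (Id 1)"
| copy_nat: "axA (Seq f (copyn (cd f))) (Seq (copyn (dm f)) (Par f f))"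
| discard_nat: "axA (Seq f (discardn (cd f))) (discardn (dm f))"
| add_comm: "axA (Seq sigma add) add"
| add_assoc: "axA (Seq (Par add (Id 1)) add) (Seq (Par (Id 1) add) add)"
| add_unitl: "axA (Seq (Par zero (Id 1)) add) (Id 1)"
| add_unitr: "axA (Seq (Par (Id 1) zero) add) (Id 1)"
| and_comm: "axA (Seq sigma andg) andg"
| and_assoc: "axA (Seq (Par andg (Id 1)) andg) (Seq (Par (Id 1) andg) andg)"
| and_unitl: "axA (Seq (Par one (Id 1)) andg) (Id 1)"
| and_unitr: "axA (Seq (Par (Id 1) one) andg) (Id 1)"
| copy_add: "axA (Seq copy add) (Seq discard zero)"
| distr: "axA (Seq (Par (Id 1) add) andg)
     (Seq (Seq (Seq (Par copy (Id 2)) (Par (Id 1) (Par sigma (Id 1)))) (Par andg andg)) add)"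

inductive axE :: "circ \<Rightarrow> circ \<Rightarrow> bool" where
  fromA: "axA c d \<Longrightarrow> axE c d"
| idem: "axE (Seq copy andg) (Id 1)"

definition eqA :: "circ \<Rightarrow> circ \<Rightarrow> bool" where "eqA = eqv axA"
definition eqE :: "circ \<Rightarrow> circ \<Rightarrow> bool" where "eqE = eqv axE"

text \<open>flow c S: given for each input wire of c the set of (global) input ports reaching it,
  returns whether every and-occurrence in c has disjoint reaching sets on its two inputs,
  together with the reaching sets of the output wires of c.\<close>
fun gflow :: "gen \<Rightarrow> nat set list \<Rightarrow> bool \<times> nat set list" where
  "gflow Discard xs = (True, [])"
| "gflow Copy xs = (True, [xs ! 0, xs ! 0])"
| "gflow Zero xs = (True, [{}])"
| "gflow One xs = (True, [{}])"
| "gflow Add xs = (True, [xs ! 0 \<union> xs ! 1])"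
| "gflow And xs = (xs ! 0 \<inter> xs ! 1 = {}, [xs ! 0 \<union> xs ! 1])"

fun flow :: "circ \<Rightarrow> nat set list \<Rightarrow> bool \<times> nat set list" where
  "flow (Gen g) xs = gflow g xs"
| "flow (Id n) xs = (True, xs)"
| "flow (Sym m n) xs = (True, drop m xs @ take m xs)"
| "flow (Seq f g) xs = (let (o1, ys) = flow f xs; (o2, zs) = flow g ys in (o1 \<and> o2, zs))"
| "flow (Par f g) xs = (let (o1, ys) = flow f (take (dm f) xs); (o2, zs) = flow g (drop (dm f) xs)
     in (o1 \<and> o2, ys @ zs))"

definition safe :: "circ \<Rightarrow> bool" where
  "safe c \<longleftrightarrow> fst (flow c (map (\<lambda>i. {i}) [0..<dm c]))"

end

(* Modulo A, every circuit a -> b equals the tuple of the b polynomials in a variables that it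
   computes (copy duplicates, add and and are sum and product), and A proves every identity of
   commutative rings with x + x = 0 between such polynomials.  E-equal circuits compute the same
   Boolean functions.  In a safe circuit no and-gate multiplies two polynomials sharing a variable,
   so all its polynomials are multilinear, and a multilinear polynomial over the two-element field
   is determined by its function.  Hence the polynomials of c and d agree in the ring, and c and d
   are A-equal. *)

theory Submission
  imports Defs "HOL-Library.Z2" "HOL-Library.More_List"
begin

lemma eqv_typing: "eqv ax c d \<Longrightarrow> wt c \<and> wt d \<and> dm c = dm d \<and> cd c = cd d"
  by (induction rule: eqv.induct) (auto simp: hasty_def)

declare eqv.trans[trans]

abbreviation eqvA (infix "\<approx>" 50) where "c \<approx> d \<equiv> eqv axA c d"

lemma wt_copyn[simp]: "wt (copyn n)"
  and dm_copyn[simp]: "dm (copyn n) = n"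
  and cd_copyn[simp]: "cd (copyn n) = 2 * n"
  by (induction n) auto

lemma wt_discardn[simp]: "wt (discardn n)"
  and dm_discardn[simp]: "dm (discardn n) = n"
  and cd_discardn[simp]: "cd (discardn n) = 0"
  by (induction n) auto

lemma eqv_smcI:
  "smc_law c d \<Longrightarrow> wt c \<Longrightarrow> wt d \<Longrightarrow> dm c = dm d \<Longrightarrow> cd c = cd d \<Longrightarrow> eqv ax c d"
  by (rule eqv.smc[where a = "dm c" and b = "cd c"]) (auto simp: hasty_def)

lemma eqv_axI:
  "ax c d \<Longrightarrow> wt c \<Longrightarrow> wt d \<Longrightarrow> dm c = dm d \<Longrightarrow> cd c = cd d \<Longrightarrow> eqv ax c d"
  by (rule eqv.ax[where a = "dm c" and b = "cd c"]) (auto simp: hasty_def)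

lemma seq_congL: "eqv ax f f' \<Longrightarrow> wt g \<Longrightarrow> cd f = dm g \<Longrightarrow> eqv ax (Seq f g) (Seq f' g)"
  by (rule eqv.seq) (auto intro: eqv.refl)

lemma seq_congR: "eqv ax g g' \<Longrightarrow> wt f \<Longrightarrow> cd f = dm g \<Longrightarrow> eqv ax (Seq f g) (Seq f g')"
  by (rule eqv.seq) (auto intro: eqv.refl)

lemma par_congL: "eqv ax f f' \<Longrightarrow> wt g \<Longrightarrow> eqv ax (Par f g) (Par f' g)"
  by (rule eqv.par) (auto intro: eqv.refl)

lemma par_congR: "eqv ax g g' \<Longrightarrow> wt f \<Longrightarrow> eqv ax (Par f g) (Par f g')"
  by (rule eqv.par) (auto intro: eqv.refl)

lemma seq_assoc: "wt f \<Longrightarrow> wt g \<Longrightarrow> wt h \<Longrightarrow> cd f = dm g \<Longrightarrow> cd g = dm h \<Longrightarrow>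
    eqv ax (Seq (Seq f g) h) (Seq f (Seq g h))"
  by (rule eqv_smcI[OF smc_law.seq_assoc]) auto

lemma seq_Id_left: "wt f \<Longrightarrow> n = dm f \<Longrightarrow> eqv ax (Seq (Id n) f) f"
  using eqv_smcI[OF smc_law.seq_idl[of f]] by auto

lemma seq_Id_right: "wt f \<Longrightarrow> n = cd f \<Longrightarrow> eqv ax (Seq f (Id n)) f"
  using eqv_smcI[OF smc_law.seq_idr[of f]] by auto

lemma par_assoc: "wt f \<Longrightarrow> wt g \<Longrightarrow> wt h \<Longrightarrow> eqv ax (Par (Par f g) h) (Par f (Par g h))"
  by (rule eqv_smcI[OF smc_law.par_assoc]) auto

lemma par_Id0_left: "wt f \<Longrightarrow> eqv ax (Par (Id 0) f) f"
  by (rule eqv_smcI[OF smc_law.par_unitl]) auto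

lemma par_Id0_right: "wt f \<Longrightarrow> eqv ax (Par f (Id 0)) f"
  by (rule eqv_smcI[OF smc_law.par_unitr]) auto

lemma par_Id_Id: "eqv ax (Par (Id m) (Id n)) (Id (m + n))"
  by (rule eqv_smcI[OF smc_law.par_id]) auto

lemma par_Id1_Id: "eqv ax (Par (Id 1) (Id n)) (Id (Suc n))"
  using par_Id_Id[of _ 1 n] by simp

lemma interchange:
  "wt f \<Longrightarrow> wt g \<Longrightarrow> wt h \<Longrightarrow> wt k \<Longrightarrow> cd f = dm g \<Longrightarrow> cd h = dm k \<Longrightarrow>
    eqv ax (Par (Seq f g) (Seq h k)) (Seq (Par f h) (Par g k))"
  by (rule eqv_smcI[OF smc_law.interchange]) auto

lemma Sym_natural: "wt f \<Longrightarrow> wt g \<Longrightarrow>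
    eqv ax (Seq (Par f g) (Sym (cd f) (cd g))) (Seq (Sym (dm f) (dm g)) (Par g f))"
  by (rule eqv_smcI[OF smc_law.sym_nat]) auto

lemma Sym_0_left: "eqv ax (Sym 0 m) (Id m)"
  by (rule eqv_smcI[OF smc_law.sym_unitl]) auto

lemma Sym_0_right: "eqv ax (Sym m 0) (Id m)"
  by (rule eqv_smcI[OF smc_law.sym_unitr]) auto

lemma copyn_natural: "wt f \<Longrightarrow> Seq f (copyn (cd f)) \<approx> Seq (copyn (dm f)) (Par f f)"
  by (rule eqv_axI[of axA, OF axA.copy_nat]) auto

lemma discardn_natural: "wt f \<Longrightarrow> Seq f (discardn (cd f)) \<approx> discardn (dm f)"
  by (rule eqv_axI[of axA, OF axA.discard_nat]) auto

lemma Sym_seq_par_swap: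
  assumes "wt f" "wt g" "cd f = 0 \<or> cd g = 0"
  shows "eqv ax (Seq (Sym (dm f) (dm g)) (Par g f)) (Par f g)"
proof -
  have "eqv ax (Seq (Sym (dm f) (dm g)) (Par g f)) (Seq (Par f g) (Sym (cd f) (cd g)))"
    using Sym_natural[of f g] assms by (simp add: eqv.sym)
  also have "eqv ax \<dots> (Seq (Par f g) (Id (cd f + cd g)))"
    using assms by (auto intro!: seq_congR Sym_0_left Sym_0_right)
  also have "eqv ax \<dots> (Par f g)"
    using assms by (intro seq_Id_right) auto
  finally show ?thesis .
qed

lemma shuffle_par_par:
  assumes w: "wt x1" "wt x2" "wt A" "wt B"
    and d: "dm x1 = 1" "dm x2 = 1" "dm A = k" "dm B = k"
    and z: "cd x2 = 0 \<or> cd A = 0"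
  shows "eqv ax (Seq (Par (Id 1) (Par (Sym 1 k) (Id k))) (Par (Par x1 A) (Par x2 B)))
    (Par (Par x1 x2) (Par A B))"
proof -
  let ?shuffle = "Par (Id 1) (Par (Sym 1 k) (Id k))"
  have "eqv ax (Seq ?shuffle (Par (Par x1 A) (Par x2 B))) (Seq ?shuffle (Par x1 (Par (Par A x2) B)))"
  proof (rule seq_congR)
    have "eqv ax (Par (Par x1 A) (Par x2 B)) (Par x1 (Par A (Par x2 B)))"
      using w by (intro par_assoc) auto
    also have "eqv ax \<dots> (Par x1 (Par (Par A x2) B))"
      using w by (intro par_congR eqv.sym[OF par_assoc]) auto
    finally show "eqv ax (Par (Par x1 A) (Par x2 B)) (Par x1 (Par (Par A x2) B))" .
  qed (use d in auto)
  also have "eqv ax \<dots> (Par (Seq (Id 1) x1) (Par (Seq (Sym 1 k) (Par A x2)) (Seq (Id k) B)))"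
  proof -
    have "eqv ax (Seq ?shuffle (Par x1 (Par (Par A x2) B)))
        (Par (Seq (Id 1) x1) (Seq (Par (Sym 1 k) (Id k)) (Par (Par A x2) B)))"
      using w d by (intro eqv.sym[OF interchange]) auto
    also have "eqv ax \<dots> (Par (Seq (Id 1) x1) (Par (Seq (Sym 1 k) (Par A x2)) (Seq (Id k) B)))"
      using w d by (intro par_congR eqv.sym[OF interchange]) auto
    finally show ?thesis .
  qed
  also have "eqv ax \<dots> (Par x1 (Par (Par x2 A) B))"
    using w d Sym_seq_par_swap[of x2 A ax] z
    by (intro eqv.par seq_Id_left) auto
  also have "eqv ax \<dots> (Par (Par x1 x2) (Par A B))"
  proof -
    have "eqv ax (Par x1 (Par (Par x2 A) B)) (Par x1 (Par x2 (Par A B)))"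
      using w by (intro par_congR par_assoc) auto
    also have "eqv ax \<dots> (Par (Par x1 x2) (Par A B))"
      using w by (intro eqv.sym[OF par_assoc]) auto
    finally show ?thesis .
  qed
  finally show ?thesis .
qed

lemma copyn_Suc_par:
  assumes w: "wt x1" "wt x2" "wt A" "wt B"
    and d: "dm x1 = 1" "dm x2 = 1" "dm A = k" "dm B = k"
    and z: "cd x2 = 0 \<or> cd A = 0"
  shows "Seq (copyn (Suc k)) (Par (Par x1 A) (Par x2 B))
    \<approx> Par (Seq copy (Par x1 x2)) (Seq (copyn k) (Par A B))"
proof -
  have "Seq (copyn (Suc k)) (Par (Par x1 A) (Par x2 B))
     \<approx> Seq (Par copy (copyn k)) (Seq (Par (Id 1) (Par (Sym 1 k) (Id k))) (Par (Par x1 A) (Par x2 B)))"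
    using w d by (simp, intro seq_assoc) auto
  also have "\<dots> \<approx> Seq (Par copy (copyn k)) (Par (Par x1 x2) (Par A B))"
    using w d z by (intro seq_congR shuffle_par_par) auto
  also have "\<dots> \<approx> Par (Seq copy (Par x1 x2)) (Seq (copyn k) (Par A B))"
    using w d by (intro eqv.sym[OF interchange]) auto
  finally show ?thesis .
qed

section \<open>Cartesian structure\<close>

lemma copy_discard_left: "Seq copy (Par discard (Id 1)) \<approx> Id 1"
  by (rule eqv_axI[of axA, OF axA.copy_unit]) auto

lemma copy_discard_right: "Seq copy (Par (Id 1) discard) \<approx> Id 1"
proof -
  have "Seq copy (Par (Id 1) discard) \<approx> Seq (Seq copy sigma) (Par (Id 1) discard)"
    by (intro seq_congL eqv.sym[OF eqv_axI[of axA, OF axA.copy_comm]]) auto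
  also have "\<dots> \<approx> Seq copy (Seq sigma (Par (Id 1) discard))"
    by (intro seq_assoc) auto
  also have "\<dots> \<approx> Seq copy (Seq (Par discard (Id 1)) (Sym 0 1))"
    using Sym_natural[of discard "Id 1"] by (intro seq_congR) (auto simp: eqv.sym)
  also have "\<dots> \<approx> Seq copy (Seq (Par discard (Id 1)) (Id 1))"
    by (intro seq_congR Sym_0_left) auto
  also have "\<dots> \<approx> Seq copy (Par discard (Id 1))"
    by (intro seq_congR seq_Id_right) auto
  also have "\<dots> \<approx> Id 1" by (rule copy_discard_left)
  finally show ?thesis .
qed

definition piL :: "nat \<Rightarrow> nat \<Rightarrow> circ" where "piL a b = Par (Id a) (discardn b)"

definition piR :: "nat \<Rightarrow> nat \<Rightarrow> circ" where "piR a b = Par (discardn a) (Id b)"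

definition pair :: "circ \<Rightarrow> circ \<Rightarrow> circ" where "pair F G = Seq (copyn (dm F)) (Par F G)"

lemma pi_simps[simp]:
  "wt (piL a b)" "dm (piL a b) = a + b" "cd (piL a b) = a"
  "wt (piR a b)" "dm (piR a b) = a + b" "cd (piR a b) = b"
  by (auto simp: piL_def piR_def)

lemma pair_simps[simp]:
  "dm (pair F G) = dm F" "cd (pair F G) = cd F + cd G"
  "wt (pair F G) \<longleftrightarrow> wt F \<and> wt G \<and> dm G = dm F"
  by (auto simp: pair_def)

lemma pair_discardn_Id: "pair (discardn k) (Id k) \<approx> Id k"
proof (induction k)
  case 0
  have "pair (discardn 0) (Id 0) \<approx> Par (Id 0) (Id 0)"
    by (simp add: pair_def, intro seq_Id_left) auto
  also have "\<dots> \<approx> Id 0" by (intro par_Id0_left) auto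
  finally show ?case .
next
  case (Suc k)
  have "Par (discardn (Suc k)) (Id (Suc k)) \<approx> Par (Par discard (discardn k)) (Par (Id 1) (Id k))"
    unfolding discardn.simps by (intro par_congR eqv.sym[OF par_Id1_Id]) auto
  then have "pair (discardn (Suc k)) (Id (Suc k))
     \<approx> Seq (copyn (Suc k)) (Par (Par discard (discardn k)) (Par (Id 1) (Id k)))"
    unfolding pair_def dm_discardn by (intro seq_congR) auto
  also have "\<dots> \<approx> Par (Seq copy (Par discard (Id 1))) (pair (discardn k) (Id k))"
    unfolding pair_def dm_discardn by (intro copyn_Suc_par) auto
  also have "\<dots> \<approx> Par (Id 1) (Id k)"
    using Suc by (intro eqv.par copy_discard_left)
  also have "\<dots> \<approx> Id (Suc k)" by (rule par_Id1_Id)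
  finally show ?case .
qed

lemma pair_piL_piR: "pair (piL a b) (piR a b) \<approx> Id (a + b)"
proof (induction a)
  case 0
  have "pair (piL 0 b) (piR 0 b) \<approx> pair (discardn b) (Id b)"
    unfolding pair_def piL_def piR_def by (simp, intro seq_congR eqv.par par_Id0_left) auto
  also have "\<dots> \<approx> Id b" by (rule pair_discardn_Id)
  finally show ?case by simp
next
  case (Suc a)
  have "Par (Id (Suc a)) (discardn b) \<approx> Par (Par (Id 1) (Id a)) (discardn b)"
    by (intro par_congL eqv.sym[OF par_Id1_Id]) auto
  also have "\<dots> \<approx> Par (Id 1) (piL a b)"
    unfolding piL_def by (intro par_assoc) auto
  finally have "piL (Suc a) b \<approx> Par (Id 1) (piL a b)"
    by (simp add: piL_def)
  moreover have "piR (Suc a) b \<approx> Par discard (piR a b)"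
    unfolding piR_def by (simp, intro par_assoc) auto
  ultimately have "pair (piL (Suc a) b) (piR (Suc a) b)
      \<approx> Seq (copyn (Suc (a + b))) (Par (Par (Id 1) (piL a b)) (Par discard (piR a b)))"
    unfolding pair_def by (simp, intro seq_congR eqv.par) auto
  also have "\<dots> \<approx> Par (Seq copy (Par (Id 1) discard)) (pair (piL a b) (piR a b))"
    unfolding pair_def pi_simps(2) by (intro copyn_Suc_par) auto
  also have "\<dots> \<approx> Par (Id 1) (Id (a + b))"
    using Suc by (intro eqv.par copy_discard_right)
  also have "\<dots> \<approx> Id (Suc a + b)"
    using par_Id1_Id by simp
  finally show ?case .
qed

lemma pair_cong:
  assumes "F \<approx> F'" "G \<approx> G'" "dm G = dm F"
  shows "pair F G \<approx> pair F' G'"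
proof -
  have "dm F' = dm F" "dm G = dm G'" "wt F" "wt G"
    using eqv_typing[OF assms(1)] eqv_typing[OF assms(2)] by auto
  then show ?thesis
    unfolding pair_def using assms by (simp, intro seq_congR eqv.par) auto
qed

lemma pair_seq_par:
  assumes "wt F" "wt G" "wt H" "wt K" "dm G = dm F" "cd F = dm H" "cd G = dm K"
  shows "Seq (pair F G) (Par H K) \<approx> pair (Seq F H) (Seq G K)"
proof -
  have "Seq (pair F G) (Par H K) \<approx> Seq (copyn (dm F)) (Seq (Par F G) (Par H K))"
    unfolding pair_def using assms by (intro seq_assoc) auto
  also have "\<dots> \<approx> pair (Seq F H) (Seq G K)"
    unfolding pair_def using assms by (simp, intro seq_congR eqv.sym[OF interchange]) auto
  finally show ?thesis .
qed

lemma seq_pair: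
  assumes "wt f" "wt F" "wt G" "dm F = cd f" "dm G = cd f"
  shows "Seq f (pair F G) \<approx> pair (Seq f F) (Seq f G)"
proof -
  have "Seq f (pair F G) \<approx> Seq (Seq f (copyn (cd f))) (Par F G)"
    unfolding pair_def assms(4) using assms by (intro eqv.sym[OF seq_assoc]) auto
  also have "\<dots> \<approx> Seq (Seq (copyn (dm f)) (Par f f)) (Par F G)"
    using assms by (intro seq_congL copyn_natural) auto
  also have "\<dots> \<approx> Seq (copyn (dm f)) (Seq (Par f f) (Par F G))"
    using assms by (intro seq_assoc) auto
  also have "\<dots> \<approx> Seq (copyn (dm f)) (Par (Seq f F) (Seq f G))"
    using assms by (intro seq_congR eqv.sym[OF interchange]) auto
  finally show ?thesis unfolding pair_def by simp
qed

lemma pair_Id_discardn: "pair (Id k) (discardn k) \<approx> Id k"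
proof -
  have "pair (Id k) (discardn k) \<approx> pair (piL k 0) (piR k 0)"
    unfolding piL_def piR_def discardn.simps(1) by (intro pair_cong eqv.sym[OF par_Id0_right]) auto
  also have "\<dots> \<approx> Id k" using pair_piL_piR[of k 0] by simp
  finally show ?thesis .
qed

lemma pair_discardn_left:
  assumes "wt G" "dm G = k"
  shows "pair (discardn k) G \<approx> G"
proof -
  have "pair (discardn k) G \<approx> pair (Seq (discardn k) (Id 0)) (Seq (Id k) G)"
    using assms by (intro pair_cong eqv.sym[OF seq_Id_right] eqv.sym[OF seq_Id_left]) auto
  also have "\<dots> \<approx> Seq (pair (discardn k) (Id k)) (Par (Id 0) G)"
    using assms by (intro eqv.sym[OF pair_seq_par]) auto
  also have "\<dots> \<approx> Seq (Id k) (Par (Id 0) G)"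
    using assms by (intro seq_congL pair_discardn_Id) auto
  also have "\<dots> \<approx> Par (Id 0) G" using assms by (intro seq_Id_left) auto
  also have "\<dots> \<approx> G" using assms by (intro par_Id0_left)
  finally show ?thesis .
qed

lemma pair_discardn_right:
  assumes "wt F" "dm F = k"
  shows "pair F (discardn k) \<approx> F"
proof -
  have "pair F (discardn k) \<approx> pair (Seq (Id k) F) (Seq (discardn k) (Id 0))"
    using assms by (intro pair_cong eqv.sym[OF seq_Id_right] eqv.sym[OF seq_Id_left]) auto
  also have "\<dots> \<approx> Seq (pair (Id k) (discardn k)) (Par F (Id 0))"
    using assms by (intro eqv.sym[OF pair_seq_par]) auto
  also have "\<dots> \<approx> Seq (Id k) (Par F (Id 0))"
    using assms by (intro seq_congL pair_Id_discardn) auto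
  also have "\<dots> \<approx> Par F (Id 0)" using assms by (intro seq_Id_left) auto
  also have "\<dots> \<approx> F" using assms by (intro par_Id0_right)
  finally show ?thesis .
qed

lemma pair_fst:
  assumes "wt F" "wt G" "dm G = dm F"
  shows "Seq (pair F G) (piL (cd F) (cd G)) \<approx> F"
proof -
  have "Seq (pair F G) (piL (cd F) (cd G)) \<approx> pair (Seq F (Id (cd F))) (Seq G (discardn (cd G)))"
    unfolding piL_def using assms by (intro pair_seq_par) auto
  also have "\<dots> \<approx> pair F (discardn (dm F))"
    using assms discardn_natural[of G] by (intro pair_cong seq_Id_right) auto
  also have "\<dots> \<approx> F" using assms by (intro pair_discardn_right) auto
  finally show ?thesis .
qed

lemma pair_snd:
  assumes "wt F" "wt G" "dm G = dm F"
  shows "Seq (pair F G) (piR (cd F) (cd G)) \<approx> G"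
proof -
  have "Seq (pair F G) (piR (cd F) (cd G)) \<approx> pair (Seq F (discardn (cd F))) (Seq G (Id (cd G)))"
    unfolding piR_def using assms by (intro pair_seq_par) auto
  also have "\<dots> \<approx> pair (discardn (dm F)) G"
    using assms discardn_natural[of F] by (intro pair_cong seq_Id_right) auto
  also have "\<dots> \<approx> G" using assms by (intro pair_discardn_left) auto
  finally show ?thesis .
qed

lemma pair_eta:
  assumes "wt X" "cd X = a + b"
  shows "X \<approx> pair (Seq X (piL a b)) (Seq X (piR a b))"
proof -
  have "X \<approx> Seq X (Id (a + b))"
    using assms by (intro eqv.sym[OF seq_Id_right]) auto
  also have "\<dots> \<approx> Seq X (pair (piL a b) (piR a b))"
    using assms by (intro seq_congR eqv.sym[OF pair_piL_piR]) auto
  also have "\<dots> \<approx> pair (Seq X (piL a b)) (Seq X (piR a b))"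
    using assms by (intro seq_pair) auto
  finally show ?thesis .
qed

lemma discardn_add: "discardn (m + n) \<approx> Par (discardn m) (discardn n)"
proof (induction m)
  case 0
  show ?case by (simp, intro eqv.sym[OF par_Id0_left]) auto
next
  case (Suc m)
  have "discardn (Suc m + n) \<approx> Par discard (Par (discardn m) (discardn n))"
    using Suc by (simp, intro par_congR) auto
  also have "\<dots> \<approx> Par (discardn (Suc m)) (discardn n)"
    by (simp, intro eqv.sym[OF par_assoc]) auto
  finally show ?case .
qed

lemma pair_assoc:
  assumes "wt F" "wt G" "wt H" "dm G = dm F" "dm H = dm F"
  shows "pair (pair F G) H \<approx> pair F (pair G H)"
proof -
  let ?X = "pair (pair F G) H" and ?a = "cd F" and ?g = "cd G" and ?h = "cd H"
  have "?X \<approx> pair (Seq ?X (piL ?a (?g + ?h))) (Seq ?X (piR ?a (?g + ?h)))"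
    using assms by (intro pair_eta) auto
  also have "\<dots> \<approx> pair F (pair G H)"
  proof (rule pair_cong)
    have "piL ?a (?g + ?h) \<approx> Par (piL ?a ?g) (discardn ?h)"
    proof -
      have "piL ?a (?g + ?h) \<approx> Par (Id ?a) (Par (discardn ?g) (discardn ?h))"
        unfolding piL_def by (intro par_congR discardn_add) auto
      also have "\<dots> \<approx> Par (piL ?a ?g) (discardn ?h)"
        unfolding piL_def by (intro eqv.sym[OF par_assoc]) auto
      finally show ?thesis .
    qed
    then have "Seq ?X (piL ?a (?g + ?h)) \<approx> Seq ?X (Par (piL ?a ?g) (discardn ?h))"
      using assms by (intro seq_congR) auto
    also have "\<dots> \<approx> pair (Seq (pair F G) (piL ?a ?g)) (Seq H (discardn ?h))"
      using assms by (intro pair_seq_par) auto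
    also have "\<dots> \<approx> pair F (discardn (dm F))"
      using assms by (intro pair_cong pair_fst discardn_natural[of H, simplified assms]) auto
    also have "\<dots> \<approx> F"
      using assms by (intro pair_discardn_right) auto
    finally show "Seq ?X (piL ?a (?g + ?h)) \<approx> F" .
    have "piR ?a (?g + ?h) \<approx> Par (piR ?a ?g) (Id ?h)"
    proof -
      have "piR ?a (?g + ?h) \<approx> Par (discardn ?a) (Par (Id ?g) (Id ?h))"
        unfolding piR_def by (intro par_congR eqv.sym[OF par_Id_Id]) auto
      also have "\<dots> \<approx> Par (piR ?a ?g) (Id ?h)"
        unfolding piR_def by (intro eqv.sym[OF par_assoc]) auto
      finally show ?thesis .
    qed
    then have "Seq ?X (piR ?a (?g + ?h)) \<approx> Seq ?X (Par (piR ?a ?g) (Id ?h))"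
      using assms by (intro seq_congR) auto
    also have "\<dots> \<approx> pair (Seq (pair F G) (piR ?a ?g)) (Seq H (Id ?h))"
      using assms by (intro pair_seq_par) auto
    also have "\<dots> \<approx> pair G H"
      using assms by (intro pair_cong pair_snd seq_Id_right) auto
    finally show "Seq ?X (piR ?a (?g + ?h)) \<approx> pair G H" .
  qed simp
  finally show ?thesis .
qed

lemma seq_discard:
  assumes "wt S" "cd S = 1"
  shows "Seq S discard \<approx> discardn (dm S)"
proof -
  have "Seq S discard \<approx> Seq S (discardn (cd S))"
    using assms by (simp, intro seq_congR eqv.sym[OF par_Id0_right]) auto
  also have "\<dots> \<approx> discardn (dm S)"
    using assms by (intro discardn_natural)
  finally show ?thesis .
qed

lemma Sym_pair: "Sym m n \<approx> pair (piR m n) (piL m n)"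
proof -
  have "Sym m n \<approx> Seq (Sym m n) (Id (n + m))"
    by (intro eqv.sym[OF seq_Id_right]) auto
  also have "\<dots> \<approx> Seq (Sym m n) (pair (piL n m) (piR n m))"
    by (intro seq_congR eqv.sym[OF pair_piL_piR]) auto
  also have "\<dots> \<approx> pair (Seq (Sym m n) (piL n m)) (Seq (Sym m n) (piR n m))"
    by (intro seq_pair) auto
  also have "\<dots> \<approx> pair (piR m n) (piL m n)"
  proof (rule pair_cong)
    have "Seq (Sym m n) (piL n m) \<approx> Seq (piR m n) (Sym 0 n)"
      using Sym_natural[of "discardn m" "Id n"] unfolding piL_def piR_def by (simp add: eqv.sym)
    also have "\<dots> \<approx> Seq (piR m n) (Id n)" by (intro seq_congR Sym_0_left) auto
    also have "\<dots> \<approx> piR m n" by (intro seq_Id_right) auto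
    finally show "Seq (Sym m n) (piL n m) \<approx> piR m n" .
    have "Seq (Sym m n) (piR n m) \<approx> Seq (piL m n) (Sym m 0)"
      using Sym_natural[of "Id m" "discardn n"] unfolding piL_def piR_def by (simp add: eqv.sym)
    also have "\<dots> \<approx> Seq (piL m n) (Id m)" by (intro seq_congR Sym_0_right) auto
    also have "\<dots> \<approx> piL m n" by (intro seq_Id_right) auto
    finally show "Seq (Sym m n) (piR n m) \<approx> piL m n" .
  qed simp
  finally show ?thesis .
qed

lemma copyn_1: "copyn 1 \<approx> copy"
proof -
  have "copyn 1 = Seq (Par copy (Id 0)) (Par (Id 1) (Par (Sym 1 0) (Id 0)))" by simp
  also have "\<dots> \<approx> Seq copy (Par (Id 1) (Par (Sym 1 0) (Id 0)))"
    by (intro seq_congL par_Id0_right) auto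
  also have "\<dots> \<approx> Seq copy (Par (Id 1) (Sym 1 0))"
    by (intro seq_congR par_congR par_Id0_right) auto
  also have "\<dots> \<approx> Seq copy (Par (Id 1) (Id 1))"
    by (intro seq_congR par_congR Sym_0_right) auto
  also have "\<dots> \<approx> Seq copy (Id 2)"
    using par_Id_Id[of _ 1 1] by (intro seq_congR) (auto simp: numeral_2_eq_2)
  also have "\<dots> \<approx> copy" by (intro seq_Id_right) auto
  finally show ?thesis .
qed

lemma discardn_par_eq_seq:
  assumes "wt X" "dm X = k"
  shows "Par (discardn m) X \<approx> Seq (piR m k) X"
proof -
  have "Par (discardn m) X \<approx> Par (Seq (discardn m) (Id 0)) (Seq (Id k) X)"
    using assms by (intro eqv.par eqv.sym[OF seq_Id_right] eqv.sym[OF seq_Id_left]) auto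
  also have "\<dots> \<approx> Seq (piR m k) (Par (Id 0) X)"
    unfolding piR_def using assms by (intro interchange) auto
  also have "\<dots> \<approx> Seq (piR m k) X"
    using assms by (intro seq_congR par_Id0_left) auto
  finally show ?thesis .
qed

lemma par_discardn_eq_seq:
  assumes "wt X" "dm X = k"
  shows "Par X (discardn m) \<approx> Seq (piL k m) X"
proof -
  have "Par X (discardn m) \<approx> Par (Seq (Id k) X) (Seq (discardn m) (Id 0))"
    using assms by (intro eqv.par eqv.sym[OF seq_Id_right] eqv.sym[OF seq_Id_left]) auto
  also have "\<dots> \<approx> Seq (piL k m) (Par X (Id 0))"
    unfolding piL_def using assms by (intro interchange) auto
  also have "\<dots> \<approx> Seq (piL k m) X"
    using assms by (intro seq_congR par_Id0_right) auto
  finally show ?thesis .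
qed

section \<open>Polynomial terms as circuits\<close>

datatype trm = TVar nat | TZero | TOne | TAdd trm trm | TMul trm trm

(* The last clause of proj is junk, as proj a i is only used for i < a.  Variables beyond the
   arity denote the constant 0, the same convention as in subst. *)
fun proj :: "nat \<Rightarrow> nat \<Rightarrow> circ" where
  "proj (Suc a) 0 = Par (Id 1) (discardn a)"
| "proj (Suc a) (Suc i) = Par discard (proj a i)"
| "proj 0 i = Seq (discardn 0) zero"

lemma proj_typing[simp]:
  "i < a \<Longrightarrow> wt (proj a i)" "i < a \<Longrightarrow> dm (proj a i) = a" "i < a \<Longrightarrow> cd (proj a i) = 1"
  by (induction a i rule: proj.induct) auto

fun term_circ :: "nat \<Rightarrow> trm \<Rightarrow> circ" where
  "term_circ a (TVar i) = (if i < a then proj a i else Seq (discardn a) zero)"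
| "term_circ a TZero = Seq (discardn a) zero"
| "term_circ a TOne = Seq (discardn a) one"
| "term_circ a (TAdd s t) = Seq (pair (term_circ a s) (term_circ a t)) add"
| "term_circ a (TMul s t) = Seq (pair (term_circ a s) (term_circ a t)) andg"

lemma term_circ_typing[simp]:
  "wt (term_circ a t)" "dm (term_circ a t) = a" "cd (term_circ a t) = 1"
  by (induction t) auto

fun tuple :: "nat \<Rightarrow> trm list \<Rightarrow> circ" where
  "tuple a [] = discardn a"
| "tuple a (t # ts) = pair (term_circ a t) (tuple a ts)"

lemma tuple_typing[simp]:
  "wt (tuple a ts)" "dm (tuple a ts) = a" "cd (tuple a ts) = length ts"
  by (induction ts) auto

fun subst :: "trm list \<Rightarrow> trm \<Rightarrow> trm" where
  "subst ss (TVar i) = (if i < length ss then ss ! i else TZero)"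
| "subst ss TZero = TZero"
| "subst ss TOne = TOne"
| "subst ss (TAdd s t) = TAdd (subst ss s) (subst ss t)"
| "subst ss (TMul s t) = TMul (subst ss s) (subst ss t)"

fun shift :: "nat \<Rightarrow> trm \<Rightarrow> trm" where
  "shift m (TVar i) = TVar (m + i)"
| "shift m TZero = TZero"
| "shift m TOne = TOne"
| "shift m (TAdd s t) = TAdd (shift m s) (shift m t)"
| "shift m (TMul s t) = TMul (shift m s) (shift m t)"

fun vars :: "trm \<Rightarrow> nat set" where
  "vars (TVar i) = {i}"
| "vars TZero = {}"
| "vars TOne = {}"
| "vars (TAdd s t) = vars s \<union> vars t"
| "vars (TMul s t) = vars s \<union> vars t"

lemma seq_gate_pair:
  assumes "wt X" "cd X = k" "wt g" "dm g = 2"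
    and "wt A" "wt B" "dm A = k" "dm B = k" "cd A = 1" "cd B = 1"
    and "Seq X A \<approx> A'" "Seq X B \<approx> B'"
  shows "Seq X (Seq (pair A B) g) \<approx> Seq (pair A' B') g"
proof -
  have "Seq X (Seq (pair A B) g) \<approx> Seq (Seq X (pair A B)) g"
    using assms by (intro eqv.sym[OF seq_assoc]) auto
  also have "\<dots> \<approx> Seq (pair (Seq X A) (Seq X B)) g"
    using assms by (intro seq_congL seq_pair) auto
  also have "\<dots> \<approx> Seq (pair A' B') g"
    using assms eqv_typing[OF assms(11)] eqv_typing[OF assms(12)] by (intro seq_congL pair_cong) auto
  finally show ?thesis .
qed

lemma seq_discardn_const:
  assumes "wt X" "wt g" "dm g = 0" "cd X = k"
  shows "Seq X (Seq (discardn k) g) \<approx> Seq (discardn (dm X)) g"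
proof -
  have "Seq X (Seq (discardn k) g) \<approx> Seq (Seq X (discardn k)) g"
    using assms by (intro eqv.sym[OF seq_assoc]) auto
  also have "\<dots> \<approx> Seq (discardn (dm X)) g"
    using assms discardn_natural[of X] by (intro seq_congL) auto
  finally show ?thesis .
qed

lemma tuple_seq_proj:
  "i < length ss \<Longrightarrow> Seq (tuple k ss) (proj (length ss) i) \<approx> term_circ k (ss ! i)"
proof (induction ss arbitrary: i)
  case Nil
  then show ?case by simp
next
  case (Cons s ss)
  show ?case
  proof (cases i)
    case 0
    have "Seq (tuple k (s # ss)) (proj (length (s # ss)) i)
       = Seq (pair (term_circ k s) (tuple k ss)) (Par (Id 1) (discardn (length ss)))"
      using 0 by simp
    also have "\<dots> \<approx> pair (Seq (term_circ k s) (Id 1)) (Seq (tuple k ss) (discardn (length ss)))"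
      by (intro pair_seq_par) auto
    also have "\<dots> \<approx> pair (term_circ k s) (discardn k)"
      using discardn_natural[of "tuple k ss"] by (intro pair_cong seq_Id_right) auto
    also have "\<dots> \<approx> term_circ k s"
      by (intro pair_discardn_right) auto
    finally show ?thesis using 0 by simp
  next
    case (Suc j)
    have "Seq (tuple k (s # ss)) (proj (length (s # ss)) i)
       = Seq (pair (term_circ k s) (tuple k ss)) (Par discard (proj (length ss) j))"
      using Suc by simp
    also have "\<dots> \<approx> pair (Seq (term_circ k s) discard) (Seq (tuple k ss) (proj (length ss) j))"
      using Cons.prems Suc by (intro pair_seq_par) auto
    also have "\<dots> \<approx> pair (discardn k) (term_circ k (ss ! j))"
      using Cons Suc seq_discard[of "term_circ k s"] by (intro pair_cong) auto
    also have "\<dots> \<approx> term_circ k (ss ! j)"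
      by (intro pair_discardn_left) auto
    finally show ?thesis using Suc by simp
  qed
qed

lemma tuple_seq_term_circ: "Seq (tuple k ss) (term_circ (length ss) u) \<approx> term_circ k (subst ss u)"
proof (induction u)
  case (TVar i)
  show ?case
  proof (cases "i < length ss")
    case True
    then show ?thesis using tuple_seq_proj[OF True] by simp
  next
    case False
    then show ?thesis using seq_discardn_const[of "tuple k ss" zero "length ss"] by simp
  qed
next
  case TZero
  then show ?case using seq_discardn_const[of "tuple k ss" zero "length ss"] by simp
next
  case TOne
  then show ?case using seq_discardn_const[of "tuple k ss" one "length ss"] by simp
next
  case (TAdd s t)
  then show ?case by (simp, intro seq_gate_pair) auto
next
  case (TMul s t)
  then show ?case by (simp, intro seq_gate_pair) auto
qed

lemma tuple_seq_tuple: "Seq (tuple k ss) (tuple (length ss) us) \<approx> tuple k (map (subst ss) us)"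
proof (induction us)
  case Nil
  then show ?case using discardn_natural[of "tuple k ss"] by simp
next
  case (Cons u us)
  have "Seq (tuple k ss) (tuple (length ss) (u # us))
     \<approx> pair (Seq (tuple k ss) (term_circ (length ss) u)) (Seq (tuple k ss) (tuple (length ss) us))"
    by (simp, intro seq_pair) auto
  also have "\<dots> \<approx> tuple k (map (subst ss) (u # us))"
    using Cons tuple_seq_term_circ by (simp, intro pair_cong) auto
  finally show ?case .
qed

lemma pair_tuple_append: "pair (tuple k ts) (tuple k us) \<approx> tuple k (ts @ us)"
proof (induction ts)
  case Nil
  then show ?case by (simp, intro pair_discardn_left) auto
next
  case (Cons t ts)
  have "pair (tuple k (t # ts)) (tuple k us) \<approx> pair (term_circ k t) (pair (tuple k ts) (tuple k us))"
    by (simp, intro pair_assoc) auto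
  also have "\<dots> \<approx> tuple k ((t # ts) @ us)"
    using Cons by (simp, intro pair_cong eqv.refl) auto
  finally show ?case .
qed

lemma tuple_single: "tuple k [t] \<approx> term_circ k t"
  by (simp, intro pair_discardn_right) auto

lemma tuple_cong:
  "list_all2 (\<lambda>t u. term_circ a t \<approx> term_circ a u) ts us \<Longrightarrow> tuple a ts \<approx> tuple a us"
proof (induction rule: list_all2_induct)
  case Nil
  show ?case by (simp, intro eqv.refl) auto
next
  case (Cons t u ts us)
  then show ?case by (simp, intro pair_cong) auto
qed

lemma discardn_par_proj: "i < k \<Longrightarrow> Par (discardn m) (proj k i) \<approx> proj (m + k) (m + i)"
proof (induction m)
  case 0
  then show ?case by (simp, intro par_Id0_left) auto
next
  case (Suc m)
  have "Par (discardn (Suc m)) (proj k i) \<approx> Par discard (Par (discardn m) (proj k i))"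
    using Suc by (simp, intro par_assoc) auto
  also have "\<dots> \<approx> Par discard (proj (m + k) (m + i))"
    using Suc by (intro par_congR) auto
  finally show ?case by simp
qed

lemma proj_par_discardn: "i < k \<Longrightarrow> Par (proj k i) (discardn m) \<approx> proj (k + m) i"
proof (induction k arbitrary: i)
  case 0
  then show ?case by simp
next
  case (Suc k)
  show ?case
  proof (cases i)
    case 0
    have "Par (proj (Suc k) i) (discardn m) \<approx> Par (Id 1) (Par (discardn k) (discardn m))"
      using 0 by (simp, intro par_assoc) auto
    also have "\<dots> \<approx> Par (Id 1) (discardn (k + m))"
      by (intro par_congR eqv.sym[OF discardn_add]) auto
    finally show ?thesis using 0 by simp
  next
    case (Suc j)
    have "Par (proj (Suc k) i) (discardn m) \<approx> Par discard (Par (proj k j) (discardn m))"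
      using Suc \<open>i < Suc k\<close> by (simp, intro par_assoc) auto
    also have "\<dots> \<approx> Par discard (proj (k + m) j)"
      using Suc.IH \<open>i < Suc k\<close> Suc by (intro par_congR) auto
    finally show ?thesis using Suc by simp
  qed
qed

lemma discardn_par_const:
  assumes "wt g" "dm g = 0"
  shows "Par (discardn m) (Seq (discardn k) g) \<approx> Seq (discardn (m + k)) g"
proof -
  have "Par (discardn m) (Seq (discardn k) g) \<approx> Par (Seq (discardn m) (Id 0)) (Seq (discardn k) g)"
    using assms by (intro par_congL eqv.sym[OF seq_Id_right]) auto
  also have "\<dots> \<approx> Seq (Par (discardn m) (discardn k)) (Par (Id 0) g)"
    using assms by (intro interchange) auto
  also have "\<dots> \<approx> Seq (discardn (m + k)) g"
    using assms by (intro eqv.seq eqv.sym[OF discardn_add] par_Id0_left) auto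
  finally show ?thesis .
qed

lemma const_par_discardn:
  assumes "wt g" "dm g = 0"
  shows "Par (Seq (discardn k) g) (discardn m) \<approx> Seq (discardn (k + m)) g"
proof -
  have "Par (Seq (discardn k) g) (discardn m) \<approx> Par (Seq (discardn k) g) (Seq (discardn m) (Id 0))"
    using assms by (intro par_congR eqv.sym[OF seq_Id_right]) auto
  also have "\<dots> \<approx> Seq (Par (discardn k) (discardn m)) (Par g (Id 0))"
    using assms by (intro interchange) auto
  also have "\<dots> \<approx> Seq (discardn (k + m)) g"
    using assms by (intro eqv.seq eqv.sym[OF discardn_add] par_Id0_right) auto
  finally show ?thesis .
qed

lemma discardn_par_term_circ: "Par (discardn m) (term_circ k t) \<approx> term_circ (m + k) (shift m t)"
proof (induction t)
  case (TVar i)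
  then show ?case using discardn_par_proj[of i k m] discardn_par_const[of zero m k] by auto
next
  case TZero
  then show ?case using discardn_par_const[of zero m k] by simp
next
  case TOne
  then show ?case using discardn_par_const[of one m k] by simp
next
  case (TAdd s t)
  have "Par (discardn m) (term_circ k (TAdd s t)) \<approx> Seq (piR m k) (term_circ k (TAdd s t))"
    by (intro discardn_par_eq_seq) auto
  also have "\<dots> \<approx> term_circ (m + k) (shift m (TAdd s t))"
    using TAdd eqv.trans[OF eqv.sym[OF discardn_par_eq_seq]] by (simp, intro seq_gate_pair) auto
  finally show ?case .
next
  case (TMul s t)
  have "Par (discardn m) (term_circ k (TMul s t)) \<approx> Seq (piR m k) (term_circ k (TMul s t))"
    by (intro discardn_par_eq_seq) auto
  also have "\<dots> \<approx> term_circ (m + k) (shift m (TMul s t))"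
    using TMul eqv.trans[OF eqv.sym[OF discardn_par_eq_seq]] by (simp, intro seq_gate_pair) auto
  finally show ?case .
qed

lemma term_circ_par_discardn:
  "vars t \<subseteq> {..<k} \<Longrightarrow> Par (term_circ k t) (discardn m) \<approx> term_circ (k + m) t"
proof (induction t)
  case (TVar i)
  then show ?case using proj_par_discardn[of i k m] by auto
next
  case TZero
  then show ?case using const_par_discardn[of zero k m] by simp
next
  case TOne
  then show ?case using const_par_discardn[of one k m] by simp
next
  case (TAdd s t)
  have "Par (term_circ k (TAdd s t)) (discardn m) \<approx> Seq (piL k m) (term_circ k (TAdd s t))"
    by (intro par_discardn_eq_seq) auto
  also have "\<dots> \<approx> term_circ (k + m) (TAdd s t)"
    using TAdd eqv.trans[OF eqv.sym[OF par_discardn_eq_seq]] by (simp, intro seq_gate_pair) auto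
  finally show ?case .
next
  case (TMul s t)
  have "Par (term_circ k (TMul s t)) (discardn m) \<approx> Seq (piL k m) (term_circ k (TMul s t))"
    by (intro par_discardn_eq_seq) auto
  also have "\<dots> \<approx> term_circ (k + m) (TMul s t)"
    using TMul eqv.trans[OF eqv.sym[OF par_discardn_eq_seq]] by (simp, intro seq_gate_pair) auto
  finally show ?case .
qed

lemma discardn_par_tuple: "Par (discardn m) (tuple k ts) \<approx> tuple (m + k) (map (shift m) ts)"
proof (induction ts)
  case Nil
  then show ?case by (simp, intro eqv.sym[OF discardn_add])
next
  case (Cons t ts)
  have "Par (discardn m) (tuple k (t # ts)) \<approx> Seq (piR m k) (tuple k (t # ts))"
    by (intro discardn_par_eq_seq) auto
  also have "\<dots> \<approx> pair (Seq (piR m k) (term_circ k t)) (Seq (piR m k) (tuple k ts))"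
    by (simp, intro seq_pair) auto
  also have "\<dots> \<approx> pair (Par (discardn m) (term_circ k t)) (Par (discardn m) (tuple k ts))"
    by (intro pair_cong eqv.sym[OF discardn_par_eq_seq]) auto
  also have "\<dots> \<approx> tuple (m + k) (map (shift m) (t # ts))"
    using Cons discardn_par_term_circ by (simp, intro pair_cong) auto
  finally show ?case .
qed

lemma tuple_par_discardn:
  "\<forall>t\<in>set ts. vars t \<subseteq> {..<k} \<Longrightarrow> Par (tuple k ts) (discardn m) \<approx> tuple (k + m) ts"
proof (induction ts)
  case Nil
  then show ?case by (simp, intro eqv.sym[OF discardn_add])
next
  case (Cons t ts)
  have "Par (tuple k (t # ts)) (discardn m) \<approx> Seq (piL k m) (tuple k (t # ts))"
    by (intro par_discardn_eq_seq) auto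
  also have "\<dots> \<approx> pair (Seq (piL k m) (term_circ k t)) (Seq (piL k m) (tuple k ts))"
    by (simp, intro seq_pair) auto
  also have "\<dots> \<approx> pair (Par (term_circ k t) (discardn m)) (Par (tuple k ts) (discardn m))"
    by (intro pair_cong eqv.sym[OF par_discardn_eq_seq]) auto
  also have "\<dots> \<approx> tuple (k + m) (t # ts)"
    using Cons term_circ_par_discardn by (simp, intro pair_cong) auto
  finally show ?case .
qed

lemma par_eq_pair:
  assumes "wt f" "wt g"
  shows "Par f g \<approx> pair (Par f (discardn (dm g))) (Par (discardn (dm f)) g)"
proof -
  let ?a = "dm f" and ?b = "dm g"
  have "Par f g \<approx> Seq (Id (?a + ?b)) (Par f g)"
    using assms by (intro eqv.sym[OF seq_Id_left]) auto
  also have "\<dots> \<approx> Seq (pair (piL ?a ?b) (piR ?a ?b)) (Par f g)"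
    using assms by (intro seq_congL eqv.sym[OF pair_piL_piR]) auto
  also have "\<dots> \<approx> pair (Seq (piL ?a ?b) f) (Seq (piR ?a ?b) g)"
    using assms by (intro pair_seq_par) auto
  also have "\<dots> \<approx> pair (Par f (discardn ?b)) (Par (discardn ?a) g)"
    using assms by (intro pair_cong eqv.sym[OF par_discardn_eq_seq] eqv.sym[OF discardn_par_eq_seq]) auto
  finally show ?thesis .
qed

lemma par_tuple:
  assumes "\<forall>t\<in>set ts. vars t \<subseteq> {..<a}"
  shows "Par (tuple a ts) (tuple b us) \<approx> tuple (a + b) (ts @ map (shift a) us)"
proof -
  have "Par (tuple a ts) (tuple b us)
      \<approx> pair (Par (tuple a ts) (discardn b)) (Par (discardn a) (tuple b us))"
    using par_eq_pair[of "tuple a ts" "tuple b us"] by simp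
  also have "\<dots> \<approx> pair (tuple (a + b) ts) (tuple (a + b) (map (shift a) us))"
    using assms by (intro pair_cong tuple_par_discardn discardn_par_tuple) auto
  also have "\<dots> \<approx> tuple (a + b) (ts @ map (shift a) us)"
    by (rule pair_tuple_append)
  finally show ?thesis .
qed

lemma Id_tuple: "Id n \<approx> tuple n (map TVar [0..<n])"
proof (induction n)
  case 0
  then show ?case by (simp, intro eqv.refl) auto
next
  case (Suc n)
  have "Id (Suc n) \<approx> pair (piL 1 n) (piR 1 n)"
    using eqv.sym[OF pair_piL_piR[of 1 n]] by simp
  also have "\<dots> \<approx> pair (term_circ (Suc n) (TVar 0)) (tuple (1 + n) (map (shift 1) (map TVar [0..<n])))"
  proof (intro pair_cong)
    show "piL 1 n \<approx> term_circ (Suc n) (TVar 0)"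
      by (simp add: piL_def, intro eqv.refl) auto
    have "piR 1 n \<approx> Par (discardn 1) (tuple n (map TVar [0..<n]))"
      unfolding piR_def using Suc by (intro par_congR) auto
    also have "\<dots> \<approx> tuple (1 + n) (map (shift 1) (map TVar [0..<n]))"
      by (rule discardn_par_tuple)
    finally show "piR 1 n \<approx> tuple (1 + n) (map (shift 1) (map TVar [0..<n]))" .
  qed auto
  also have "map (shift 1) (map TVar [0..<n]) = map TVar [1..<Suc n]"
    by (rule nth_equalityI) (auto simp del: upt_Suc)
  finally show ?case by (simp add: upt_conv_Cons del: upt_Suc)
qed

section \<open>Normal form of circuits\<close>

fun gen_terms :: "gen \<Rightarrow> trm list" where
  "gen_terms Discard = []"
| "gen_terms Copy = [TVar 0, TVar 0]"
| "gen_terms Zero = [TZero]"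
| "gen_terms One = [TOne]"
| "gen_terms Add = [TAdd (TVar 0) (TVar 1)]"
| "gen_terms And = [TMul (TVar 0) (TVar 1)]"

fun terms :: "circ \<Rightarrow> trm list" where
  "terms (Gen g) = gen_terms g"
| "terms (Id n) = map TVar [0..<n]"
| "terms (Sym m n) = map TVar [m..<m+n] @ map TVar [0..<m]"
| "terms (Seq f g) = map (subst (terms f)) (terms g)"
| "terms (Par f g) = terms f @ map (shift (dm f)) (terms g)"

lemma vars_subst: "vars (subst ss u) \<subseteq> \<Union> (vars ` set ss)"
  by (induction u) (use nth_mem in fastforce)+

lemma vars_shift: "vars (shift m t) = (\<lambda>i. m + i) ` vars t"
  by (induction t) auto

lemma terms_typing:
  "wt c \<Longrightarrow> length (terms c) = cd c \<and> (\<forall>t\<in>set (terms c). vars t \<subseteq> {..<dm c})"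
proof (induction c)
  case (Gen g)
  then show ?case by (cases g) auto
next
  case (Seq f g)
  then show ?case using vars_subst by fastforce
next
  case (Par f g)
  then show ?case by (fastforce simp: vars_shift)
qed auto

lemma gate_eq_tuple_projs:
  assumes "wt g" "dm g = 2"
  shows "g \<approx> Seq (pair (proj 2 0) (proj 2 1)) g"
proof -
  have "proj 2 1 \<approx> Par discard (Id 1)"
    by (simp add: numeral_2_eq_2, intro par_congR par_Id0_right) auto
  also have "\<dots> \<approx> Par discard (Par (Id 0) (Id 1))"
    by (intro par_congR eqv.sym[OF par_Id0_left]) auto
  also have "\<dots> \<approx> piR 1 1"
    unfolding piR_def by (simp, intro eqv.sym[OF par_assoc]) auto
  finally have proj1: "proj 2 1 \<approx> piR 1 1" .
  have proj0: "proj 2 0 = piL 1 1"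
    by (simp add: numeral_2_eq_2 piL_def)
  have "pair (proj 2 0) (proj 2 1) \<approx> pair (piL 1 1) (piR 1 1)"
    unfolding proj0 using proj1 by (intro pair_cong eqv.refl) (auto simp: numeral_2_eq_2)
  also have "\<dots> \<approx> Id 2"
    using pair_piL_piR[of 1 1] by (simp add: numeral_2_eq_2)
  finally have "Seq (pair (proj 2 0) (proj 2 1)) g \<approx> Seq (Id 2) g"
    using assms by (intro seq_congL) (auto simp: numeral_2_eq_2)
  also have "\<dots> \<approx> g"
    using assms by (intro seq_Id_left) auto
  finally show ?thesis by (rule eqv.sym)
qed

lemma Gen_tuple: "Gen g \<approx> tuple (gdom g) (gen_terms g)"
proof (cases g)
  case Discard
  then show ?thesis by (simp, intro eqv.sym[OF par_Id0_right]) auto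
next
  case Zero
  have "zero \<approx> Seq (Id 0) zero"
    by (intro eqv.sym[OF seq_Id_left]) auto
  also have "\<dots> \<approx> tuple 0 [TZero]"
    using eqv.sym[OF tuple_single[of 0 TZero]] by simp
  finally show ?thesis using Zero by simp
next
  case One
  have "one \<approx> Seq (Id 0) one"
    by (intro eqv.sym[OF seq_Id_left]) auto
  also have "\<dots> \<approx> tuple 0 [TOne]"
    using eqv.sym[OF tuple_single[of 0 TOne]] by simp
  finally show ?thesis using One by simp
next
  case Copy
  have var: "term_circ 1 (TVar 0) \<approx> Id 1"
    by (simp, intro par_Id0_right) auto
  have Id2: "Par (Id 1) (Id 1) \<approx> Id 2"
    using par_Id_Id[of _ 1 1] by (simp only: one_add_one)
  have "copy \<approx> Seq (copyn 1) (Id 2)"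
    by (rule eqv.trans[OF eqv.sym[OF copyn_1] eqv.sym[OF seq_Id_right]]) auto
  also have "\<dots> \<approx> pair (Id 1) (Id 1)"
    unfolding pair_def dm.simps by (intro seq_congR eqv.sym[OF Id2]) auto
  also have "\<dots> \<approx> pair (term_circ 1 (TVar 0)) (pair (term_circ 1 (TVar 0)) (discardn 1))"
  proof (intro pair_cong)
    show "Id 1 \<approx> term_circ 1 (TVar 0)"
      by (rule eqv.sym[OF var])
    have "pair (term_circ 1 (TVar 0)) (discardn 1) \<approx> Id 1"
      using var by (intro eqv.trans[OF pair_discardn_right]) auto
    then show "Id 1 \<approx> pair (term_circ 1 (TVar 0)) (discardn 1)"
      by (rule eqv.sym)
  qed auto
  finally show ?thesis using Copy by simp
next
  case Add
  have "add \<approx> Seq (pair (proj 2 0) (proj 2 1)) add"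
    by (intro gate_eq_tuple_projs) auto
  also have "\<dots> \<approx> tuple 2 [TAdd (TVar 0) (TVar 1)]"
    using eqv.sym[OF tuple_single[of 2 "TAdd (TVar 0) (TVar 1)"]] by simp
  finally show ?thesis using Add by simp
next
  case And
  have "andg \<approx> Seq (pair (proj 2 0) (proj 2 1)) andg"
    by (intro gate_eq_tuple_projs) auto
  also have "\<dots> \<approx> tuple 2 [TMul (TVar 0) (TVar 1)]"
    using eqv.sym[OF tuple_single[of 2 "TMul (TVar 0) (TVar 1)"]] by simp
  finally show ?thesis using And by simp
qed

lemma Sym_tuple: "Sym m n \<approx> tuple (m + n) (terms (Sym m n))"
proof -
  have "Sym m n \<approx> pair (piR m n) (piL m n)"
    by (rule Sym_pair)
  also have "\<dots> \<approx> pair (tuple (m + n) (map TVar [m..<m+n])) (tuple (m + n) (map TVar [0..<m]))"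
  proof (intro pair_cong)
    have "piR m n \<approx> Par (discardn m) (tuple n (map TVar [0..<n]))"
      unfolding piR_def by (intro par_congR Id_tuple) auto
    also have "\<dots> \<approx> tuple (m + n) (map (shift m) (map TVar [0..<n]))"
      by (rule discardn_par_tuple)
    also have "map (shift m) (map TVar [0..<n]) = map TVar [m..<m+n]"
      by (rule nth_equalityI) auto
    finally show "piR m n \<approx> tuple (m + n) (map TVar [m..<m+n])" .
    have "piL m n \<approx> Par (tuple m (map TVar [0..<m])) (discardn n)"
      unfolding piL_def by (intro par_congL Id_tuple) auto
    also have "\<dots> \<approx> tuple (m + n) (map TVar [0..<m])"
      by (rule tuple_par_discardn) auto
    finally show "piL m n \<approx> tuple (m + n) (map TVar [0..<m])" .
  qed auto
  also have "\<dots> \<approx> tuple (m + n) (terms (Sym m n))"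
    using pair_tuple_append by simp
  finally show ?thesis .
qed

theorem eqvA_tuple_terms: "wt c \<Longrightarrow> c \<approx> tuple (dm c) (terms c)"
proof (induction c)
  case (Gen g)
  then show ?case using Gen_tuple by simp
next
  case (Id n)
  then show ?case using Id_tuple by simp
next
  case (Sym m n)
  then show ?case using Sym_tuple by simp
next
  case (Seq f g)
  have "Seq f g \<approx> Seq (tuple (dm f) (terms f)) (tuple (dm g) (terms g))"
    using Seq by (intro eqv.seq) auto
  also have "\<dots> \<approx> tuple (dm f) (terms (Seq f g))"
    using tuple_seq_tuple[of "dm f" "terms f" "terms g"] Seq terms_typing[of f] by simp
  finally show ?case by simp
next
  case (Par f g)
  have "Par f g \<approx> Par (tuple (dm f) (terms f)) (tuple (dm g) (terms g))"
    using Par by (intro eqv.par) auto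
  also have "\<dots> \<approx> tuple (dm (Par f g)) (terms (Par f g))"
    using Par terms_typing[of f] by (simp, intro par_tuple) auto
  finally show ?case .
qed

section \<open>The ring laws on terms\<close>

(* The laws are the terms of the A-equations add_comm, add_assoc, add_unitl, and_comm, and_assoc,
   and_unitl, copy_add and distr: the axioms of commutative rings satisfying x + x = 0. *)
inductive ring_law :: "nat \<Rightarrow> trm \<Rightarrow> trm \<Rightarrow> bool" where
  "ring_law 2 (TAdd (TVar 1) (TVar 0)) (TAdd (TVar 0) (TVar 1))"
| "ring_law 3 (TAdd (TAdd (TVar 0) (TVar 1)) (TVar 2)) (TAdd (TVar 0) (TAdd (TVar 1) (TVar 2)))"
| "ring_law 1 (TAdd TZero (TVar 0)) (TVar 0)"
| "ring_law 2 (TMul (TVar 1) (TVar 0)) (TMul (TVar 0) (TVar 1))"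
| "ring_law 3 (TMul (TMul (TVar 0) (TVar 1)) (TVar 2)) (TMul (TVar 0) (TMul (TVar 1) (TVar 2)))"
| "ring_law 1 (TMul TOne (TVar 0)) (TVar 0)"
| "ring_law 1 (TAdd (TVar 0) (TVar 0)) TZero"
| "ring_law 3 (TMul (TVar 0) (TAdd (TVar 1) (TVar 2)))
    (TAdd (TMul (TVar 0) (TVar 1)) (TMul (TVar 0) (TVar 2)))"

inductive ring_eq :: "trm \<Rightarrow> trm \<Rightarrow> bool" where
  ring_law_inst: "ring_law n l r \<Longrightarrow> length ss = n \<Longrightarrow> ring_eq (subst ss l) (subst ss r)"
| ring_refl: "ring_eq t t"
| ring_sym: "ring_eq s t \<Longrightarrow> ring_eq t s"
| ring_trans: "ring_eq s t \<Longrightarrow> ring_eq t u \<Longrightarrow> ring_eq s u"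
| TAdd_cong: "ring_eq s s' \<Longrightarrow> ring_eq t t' \<Longrightarrow> ring_eq (TAdd s t) (TAdd s' t')"
| TMul_cong: "ring_eq s s' \<Longrightarrow> ring_eq t t' \<Longrightarrow> ring_eq (TMul s t) (TMul s' t')"

lemma axA_law_sound:
  assumes "axA C D" "wt C" "wt D" "dm C = n" "dm D = n" "cd C = 1" "cd D = 1"
    and "terms C = [l]" "terms D = [r]" "length ss = n"
  shows "term_circ k (subst ss l) \<approx> term_circ k (subst ss r)"
proof -
  have "C \<approx> term_circ n l"
    using eqvA_tuple_terms[of C] tuple_single[of n l] assms by (auto intro: eqv.trans)
  moreover have "D \<approx> term_circ n r"
    using eqvA_tuple_terms[of D] tuple_single[of n r] assms by (auto intro: eqv.trans)
  moreover have "C \<approx> D"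
    using assms by (intro eqv_axI) auto
  ultimately have "term_circ n l \<approx> term_circ n r"
    by (meson eqv.sym eqv.trans)
  then have "Seq (tuple k ss) (term_circ n l) \<approx> Seq (tuple k ss) (term_circ n r)"
    using assms by (intro seq_congR) auto
  then show ?thesis
    using tuple_seq_term_circ[of k ss] assms by (metis eqv.sym eqv.trans)
qed

lemma ring_law_sound:
  "ring_law n l r \<Longrightarrow> length ss = n \<Longrightarrow> term_circ k (subst ss l) \<approx> term_circ k (subst ss r)"
proof (induction rule: ring_law.induct)
  case 1
  then show ?case by (intro axA_law_sound[OF axA.add_comm]) (auto simp: upt_rec)
next
  case 2
  then show ?case by (intro axA_law_sound[OF axA.add_assoc]) (auto simp: upt_rec)
next
  case 3
  then show ?case by (intro axA_law_sound[OF axA.add_unitl]) (auto simp: upt_rec)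
next
  case 4
  then show ?case by (intro axA_law_sound[OF axA.and_comm]) (auto simp: upt_rec)
next
  case 5
  then show ?case by (intro axA_law_sound[OF axA.and_assoc]) (auto simp: upt_rec)
next
  case 6
  then show ?case by (intro axA_law_sound[OF axA.and_unitl]) (auto simp: upt_rec)
next
  case 7
  then show ?case by (intro axA_law_sound[OF axA.copy_add]) (auto simp: upt_rec)
next
  case 8
  then show ?case by (intro axA_law_sound[OF axA.distr]) (auto simp: upt_rec)
qed

lemma ring_eq_sound: "ring_eq s t \<Longrightarrow> term_circ k s \<approx> term_circ k t"
proof (induction rule: ring_eq.induct)
  case (ring_law_inst n l r ss)
  then show ?case by (rule ring_law_sound)
next
  case (ring_refl t)
  then show ?case by (intro eqv.refl) auto
next
  case (ring_sym s t)
  show ?case by (rule eqv.sym[OF ring_sym.IH])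
next
  case (ring_trans s t u)
  show ?case by (rule eqv.trans[OF ring_trans.IH])
next
  case (TAdd_cong s s' t t')
  then show ?case by (simp, intro seq_congL pair_cong) auto
next
  case (TMul_cong s s' t t')
  then show ?case by (simp, intro seq_congL pair_cong) auto
qed

section \<open>Boolean semantics\<close>

lemma bit_add_self[simp]: "x + x = (0::bit)"
  by (cases x) simp_all

lemma bit_mult_self[simp]: "x * x = (x::bit)"
  by (cases x) simp_all

fun teval :: "(nat \<Rightarrow> bit) \<Rightarrow> trm \<Rightarrow> bit" where
  "teval \<rho> (TVar i) = \<rho> i"
| "teval \<rho> TZero = 0"
| "teval \<rho> TOne = 1"
| "teval \<rho> (TAdd s t) = teval \<rho> s + teval \<rho> t"
| "teval \<rho> (TMul s t) = teval \<rho> s * teval \<rho> t"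

lemma teval_subst: "teval \<rho> (subst ss u) = teval (nth_default 0 (map (teval \<rho>) ss)) u"
  by (induction u) (auto simp: nth_default_def)

lemma teval_shift: "teval \<rho> (shift m t) = teval (\<lambda>i. \<rho> (m + i)) t"
  by (induction t) auto

lemma teval_cong: "(\<And>i. i \<in> vars t \<Longrightarrow> \<rho> i = \<rho>' i) \<Longrightarrow> teval \<rho> t = teval \<rho>' t"
  by (induction t) auto

lemma ring_law_teval: "ring_law n l r \<Longrightarrow> teval \<rho> l = teval \<rho> r"
  by (induction rule: ring_law.induct) (auto simp: algebra_simps)

lemma ring_eq_teval: "ring_eq s t \<Longrightarrow> teval \<rho> s = teval \<rho> t"
  by (induction rule: ring_eq.induct) (auto simp: teval_subst ring_law_teval)

definition den :: "circ \<Rightarrow> (nat \<Rightarrow> bit) \<Rightarrow> bit list" where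
  "den c \<rho> = map (teval \<rho>) (terms c)"

lemma map_upt_shift: "map f [m..<m + n] = map (\<lambda>i. f (m + i)) [0..<n]"
  by (rule nth_equalityI) auto

lemma map_upt_add: "map \<rho> [0..<m + n] = map \<rho> [0..<m] @ map (\<lambda>i. \<rho> (m + i)) [0..<n]"
  by (rule nth_equalityI) (auto simp: nth_append)

lemma map_upt_eqI: "length xs = n \<Longrightarrow> (\<And>i. i < n \<Longrightarrow> f i = xs ! i) \<Longrightarrow> map f [0..<n] = xs"
  by (rule nth_equalityI) auto

lemma map_upt_cong: "(\<And>i. i < n \<Longrightarrow> f i = g i) \<Longrightarrow> map f [0..<n] = map g [0..<n]"
  by auto

lemma nth_default_append_left[simp]:
  "i < length xs \<Longrightarrow> nth_default d (xs @ ys) i = nth_default d xs i"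
  by (simp add: nth_default_def nth_append)

lemma nth_default_append_right[simp]: "nth_default d (xs @ ys) (length xs + i) = nth_default d ys i"
  by (simp add: nth_default_def nth_append)

lemma nth_default_map_upt[simp]: "i < n \<Longrightarrow> nth_default d (map \<rho> [0..<n]) i = \<rho> i"
  by (simp add: nth_default_def)

lemma den_seq[simp]: "den (Seq f g) \<rho> = den g (nth_default 0 (den f \<rho>))"
  by (simp add: den_def teval_subst)

lemma den_par[simp]: "den (Par f g) \<rho> = den f \<rho> @ den g (\<lambda>i. \<rho> (dm f + i))"
  by (simp add: den_def teval_shift)

lemma den_id[simp]: "den (Id n) \<rho> = map \<rho> [0..<n]"
  by (simp add: den_def)

lemma den_sym[simp]: "den (Sym m n) \<rho> = map (\<lambda>i. \<rho> (m + i)) [0..<n] @ map \<rho> [0..<m]"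
  by (simp add: den_def map_upt_shift)

lemma den_gen[simp]:
  "den discard \<rho> = []" "den copy \<rho> = [\<rho> 0, \<rho> 0]" "den zero \<rho> = [0]" "den one \<rho> = [1]"
  "den add \<rho> = [\<rho> 0 + \<rho> 1]" "den andg \<rho> = [\<rho> 0 * \<rho> 1]"
  by (simp_all add: den_def)

lemma length_den[simp]: "wt c \<Longrightarrow> length (den c \<rho>) = cd c"
  using terms_typing[of c] by (simp add: den_def)

lemma den_cong: "wt c \<Longrightarrow> (\<And>i. i < dm c \<Longrightarrow> \<rho> i = \<rho>' i) \<Longrightarrow> den c \<rho> = den c \<rho>'"
  using terms_typing[of c] unfolding den_def by (auto intro!: teval_cong)

lemma den_discardn[simp]: "den (discardn n) \<rho> = []"
  by (induction n arbitrary: \<rho>) auto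

lemma den_copyn: "den (copyn n) \<rho> = map \<rho> [0..<n] @ map \<rho> [0..<n]"
proof (induction n arbitrary: \<rho>)
  case 0
  then show ?case by simp
next
  case (Suc n)
  define A where "A = map (\<lambda>i. \<rho> (Suc i)) [0..<n]"
  define L where "L = [\<rho> 0, \<rho> 0] @ A @ A"
  have lA: "length A = n" by (simp add: A_def)
  have "den (copyn (Suc n)) \<rho> = den (Par (Id 1) (Par (Sym 1 n) (Id n))) (nth_default 0 L)"
    using Suc by (simp add: A_def L_def)
  also have "\<dots> = [nth_default 0 L 0]
      @ (map (\<lambda>i. nth_default 0 L (2 + i)) [0..<n] @ [nth_default 0 L 1])
      @ map (\<lambda>i. nth_default 0 L (2 + n + i)) [0..<n]"
    by (simp add: ac_simps)
  also have "map (\<lambda>i. nth_default 0 L (2 + i)) [0..<n] = A"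
    by (rule map_upt_eqI[OF lA]) (auto simp: L_def nth_default_def nth_append lA)
  also have "map (\<lambda>i. nth_default 0 L (2 + n + i)) [0..<n] = A"
    by (rule map_upt_eqI[OF lA]) (auto simp: L_def nth_default_def nth_append lA)
  also have "nth_default 0 L 0 = \<rho> 0" by (simp add: L_def)
  also have "nth_default 0 L 1 = \<rho> 0" by (simp add: L_def nth_default_def)
  also have "[\<rho> 0] @ (A @ [\<rho> 0]) @ A = (\<rho> 0 # A) @ (\<rho> 0 # A)" by simp
  also have "\<rho> 0 # A = map \<rho> [0..<Suc n]"
    unfolding A_def by (rule nth_equalityI) (auto simp: nth_Cons' simp del: upt_Suc)
  finally show ?case .
qed

lemma den_copy_nat:
  assumes "wt f"
  shows "den (Seq f (copyn (cd f))) \<rho> = den (Seq (copyn (dm f)) (Par f f)) \<rho>"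
proof -
  let ?xs = "map \<rho> [0..<dm f]"
  have "den (Seq f (copyn (cd f))) \<rho> = den f \<rho> @ den f \<rho>"
    using assms map_nth_default[of 0 "den f \<rho>"] by (simp add: den_copyn)
  moreover have "den f (nth_default 0 (?xs @ ?xs)) = den f \<rho>"
    using assms by (intro den_cong) auto
  moreover have "den f (\<lambda>i. nth_default 0 (?xs @ ?xs) (dm f + i)) = den f \<rho>"
    using assms nth_default_append_right[of 0 ?xs ?xs] by (intro den_cong) auto
  ultimately show ?thesis by (simp add: den_copyn)
qed

lemma axA_den: "axA c d \<Longrightarrow> wt c \<Longrightarrow> den c \<rho> = den d \<rho>"
proof (induction rule: axA.induct)
  case (copy_nat f)
  then show ?case by (intro den_copy_nat) simp
qed (auto simp: nth_default_def algebra_simps)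

lemma den_sym_nat:
  assumes "wt f" "wt g"
  shows "den (Seq (Par f g) (Sym (cd f) (cd g))) \<rho> = den (Seq (Sym (dm f) (dm g)) (Par g f)) \<rho>"
proof -
  let ?Df = "den f \<rho>" and ?Dg = "den g (\<lambda>i. \<rho> (dm f + i))"
  let ?S = "map (\<lambda>i. \<rho> (dm f + i)) [0..<dm g] @ map \<rho> [0..<dm f]"
  have "den (Seq (Par f g) (Sym (cd f) (cd g))) \<rho>
      = map (\<lambda>i. nth_default 0 (?Df @ ?Dg) (cd f + i)) [0..<cd g]
        @ map (nth_default 0 (?Df @ ?Dg)) [0..<cd f]"
    by simp
  also have "\<dots> = ?Dg @ ?Df"
    using assms by (auto simp: nth_default_def nth_append intro!: map_upt_eqI)
  also have "?Dg = den g (nth_default 0 ?S)"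
    using assms by (intro den_cong) (auto simp: nth_default_def nth_append)
  also have "?Df = den f (\<lambda>i. nth_default 0 ?S (dm g + i))"
    using assms by (intro den_cong) (auto simp: nth_default_def nth_append)
  finally show ?thesis by simp
qed

lemma den_sym_inv: "den (Seq (Sym m n) (Sym n m)) \<rho> = den (Id (m + n)) \<rho>"
proof -
  let ?S = "map (\<lambda>i. \<rho> (m + i)) [0..<n] @ map \<rho> [0..<m]"
  have "den (Seq (Sym m n) (Sym n m)) \<rho>
      = map (\<lambda>i. nth_default 0 ?S (n + i)) [0..<m] @ map (nth_default 0 ?S) [0..<n]"
    by simp
  also have "map (\<lambda>i. nth_default 0 ?S (n + i)) [0..<m] = map \<rho> [0..<m]"
    by (rule map_upt_cong) (simp add: nth_default_append)
  also have "map (nth_default 0 ?S) [0..<n] = map (\<lambda>i. \<rho> (m + i)) [0..<n]"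
    by (rule map_upt_cong) (simp add: nth_default_append)
  finally show ?thesis by (simp add: map_upt_add)
qed

lemma den_sym_hex1:
  "den (Sym (m + n) p) \<rho> = den (Seq (Par (Id m) (Sym n p)) (Par (Sym m p) (Id n))) \<rho>"
proof -
  let ?S = "map \<rho> [0..<m] @ (map (\<lambda>i. \<rho> (m + (n + i))) [0..<p] @ map (\<lambda>i. \<rho> (m + i)) [0..<n])"
  have "den (Seq (Par (Id m) (Sym n p)) (Par (Sym m p) (Id n))) \<rho>
      = (map (\<lambda>i. nth_default 0 ?S (m + i)) [0..<p] @ map (nth_default 0 ?S) [0..<m])
        @ map (\<lambda>i. nth_default 0 ?S (m + p + i)) [0..<n]"
    by simp
  also have "map (\<lambda>i. nth_default 0 ?S (m + i)) [0..<p] = map (\<lambda>i. \<rho> (m + n + i)) [0..<p]"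
    by (rule map_upt_cong) (simp add: nth_default_append add.assoc)
  also have "map (nth_default 0 ?S) [0..<m] = map \<rho> [0..<m]"
    by (rule map_upt_cong) (simp add: nth_default_append)
  also have "map (\<lambda>i. nth_default 0 ?S (m + p + i)) [0..<n] = map (\<lambda>i. \<rho> (m + i)) [0..<n]"
    by (rule map_upt_cong) (simp add: nth_default_append)
  finally show ?thesis by (simp add: map_upt_add)
qed

lemma den_sym_hex2:
  "den (Sym m (n + p)) \<rho> = den (Seq (Par (Sym m n) (Id p)) (Par (Id n) (Sym m p))) \<rho>"
proof -
  let ?S = "(map (\<lambda>i. \<rho> (m + i)) [0..<n] @ map \<rho> [0..<m]) @ map (\<lambda>i. \<rho> (m + n + i)) [0..<p]"
  have "den (Seq (Par (Sym m n) (Id p)) (Par (Id n) (Sym m p))) \<rho>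
      = map (nth_default 0 ?S) [0..<n]
        @ (map (\<lambda>i. nth_default 0 ?S (n + (m + i))) [0..<p]
           @ map (\<lambda>i. nth_default 0 ?S (n + i)) [0..<m])"
    by simp
  also have "map (nth_default 0 ?S) [0..<n] = map (\<lambda>i. \<rho> (m + i)) [0..<n]"
    by (rule map_upt_cong) (simp add: nth_default_append)
  also have "map (\<lambda>i. nth_default 0 ?S (n + (m + i))) [0..<p] = map (\<lambda>i. \<rho> (m + (n + i))) [0..<p]"
    by (rule map_upt_cong) (simp add: nth_default_append add.assoc)
  also have "map (\<lambda>i. nth_default 0 ?S (n + i)) [0..<m] = map \<rho> [0..<m]"
    by (rule map_upt_cong) (simp add: nth_default_append)
  finally show ?thesis using map_upt_add[of "\<lambda>i. \<rho> (m + i)" n p] by simp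
qed

lemma smc_law_den: "smc_law c d \<Longrightarrow> wt c \<Longrightarrow> den c \<rho> = den d \<rho>"
proof (induction arbitrary: \<rho> rule: smc_law.induct)
  case (seq_idl f)
  then show ?case by (simp, intro den_cong) auto
next
  case (seq_idr f)
  then show ?case using map_nth_default[of 0 "den f \<rho>"] by simp
next
  case (par_assoc f g h)
  then show ?case by (simp add: add.assoc)
next
  case (par_id m n)
  then show ?case by (simp add: map_upt_add)
next
  case (interchange f g h k)
  let ?Df = "den f \<rho>" and ?Dh = "den h (\<lambda>i. \<rho> (dm f + i))"
  have "den g (nth_default 0 (?Df @ ?Dh)) = den g (nth_default 0 ?Df)"
    using interchange by (intro den_cong) auto
  moreover have "den k (\<lambda>i. nth_default 0 (?Df @ ?Dh) (dm g + i)) = den k (nth_default 0 ?Dh)"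
    using interchange nth_default_append_right[of 0 ?Df ?Dh] by (intro den_cong) auto
  ultimately show ?case using interchange by simp
next
  case (sym_nat f g)
  then show ?case by (intro den_sym_nat) auto
qed (simp_all only: den_sym_inv den_sym_hex1 den_sym_hex2, simp_all)

lemma eqvE_den: "eqv axE c d \<Longrightarrow> den c \<rho> = den d \<rho>"
proof (induction arbitrary: \<rho> rule: eqv.induct)
  case (ax c d a b)
  then show ?case
  proof (cases rule: axE.cases)
    case fromA
    then show ?thesis using ax axA_den by (auto simp: hasty_def)
  next
    case idem
    then show ?thesis by (simp add: nth_default_def)
  qed
next
  case (smc c d a b)
  then show ?case using smc_law_den by (auto simp: hasty_def)
next
  case (seq f f' g g')
  then show ?case by simp
next
  case (par f f' g g')
  then show ?case using eqv_typing[OF par.hyps(1)] by simp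
qed auto

section \<open>Multilinear terms\<close>

lemma ring_eq_equivp: "equivp ring_eq"
  by (rule equivpI) (auto simp: reflp_def symp_def transp_def intro: ring_eq.intros)

lemma ring_eq_add_comm: "ring_eq (TAdd a b) (TAdd b a)"
  using ring_law_inst[OF ring_law.intros(1), of "[b, a]"] by simp

lemma ring_eq_add_assoc: "ring_eq (TAdd (TAdd a b) c) (TAdd a (TAdd b c))"
  using ring_law_inst[OF ring_law.intros(2), of "[a, b, c]"] by simp

lemma ring_eq_add_0: "ring_eq (TAdd TZero a) a"
  using ring_law_inst[OF ring_law.intros(3), of "[a]"] by simp

lemma ring_eq_mult_comm: "ring_eq (TMul a b) (TMul b a)"
  using ring_law_inst[OF ring_law.intros(4), of "[b, a]"] by simp

lemma ring_eq_mult_assoc: "ring_eq (TMul (TMul a b) c) (TMul a (TMul b c))"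
  using ring_law_inst[OF ring_law.intros(5), of "[a, b, c]"] by simp

lemma ring_eq_mult_1: "ring_eq (TMul TOne a) a"
  using ring_law_inst[OF ring_law.intros(6), of "[a]"] by simp

lemma ring_eq_add_self: "ring_eq (TAdd a a) TZero"
  using ring_law_inst[OF ring_law.intros(7), of "[a]"] by simp

lemma ring_eq_distrib: "ring_eq (TMul c (TAdd a b)) (TAdd (TMul c a) (TMul c b))"
  using ring_law_inst[OF ring_law.intros(8), of "[c, a, b]"] by simp

quotient_type rpoly = trm / ring_eq
  by (rule ring_eq_equivp)

instantiation rpoly :: comm_ring_1
begin

lift_definition zero_rpoly :: rpoly is TZero .
lift_definition one_rpoly :: rpoly is TOne .
lift_definition plus_rpoly :: "rpoly \<Rightarrow> rpoly \<Rightarrow> rpoly" is TAdd by (rule TAdd_cong)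
lift_definition times_rpoly :: "rpoly \<Rightarrow> rpoly \<Rightarrow> rpoly" is TMul by (rule TMul_cong)
lift_definition uminus_rpoly :: "rpoly \<Rightarrow> rpoly" is "\<lambda>x. x" .
lift_definition minus_rpoly :: "rpoly \<Rightarrow> rpoly \<Rightarrow> rpoly" is TAdd by (rule TAdd_cong)

instance
proof
  fix a b c :: rpoly
  show "a + b + c = a + (b + c)" by transfer (rule ring_eq_add_assoc)
  show "a + b = b + a" by transfer (rule ring_eq_add_comm)
  show "0 + a = a" by transfer (rule ring_eq_add_0)
  show "- a + a = 0" by transfer (rule ring_eq_add_self)
  show "a - b = a + - b" by transfer (rule ring_refl)
  show "a * b * c = a * (b * c)" by transfer (rule ring_eq_mult_assoc)
  show "a * b = b * a" by transfer (rule ring_eq_mult_comm)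
  show "1 * a = a" by transfer (rule ring_eq_mult_1)
  show "(a + b) * c = a * c + b * c"
    by transfer (meson ring_eq_mult_comm ring_eq_distrib TAdd_cong ring_trans)
  show "(0::rpoly) \<noteq> 1"
    by transfer (use ring_eq_teval[of TZero TOne "\<lambda>_. 0"] in auto)
qed

end

lemma rpoly_add_self: "x + x = (0::rpoly)"
proof -
  have "- x = x" by transfer (rule ring_refl)
  then show ?thesis using add.left_inverse[of x] by simp
qed

lemma abs_rpoly_hom:
  "abs_rpoly TZero = 0" "abs_rpoly TOne = 1"
  "abs_rpoly (TAdd s t) = abs_rpoly s + abs_rpoly t" "abs_rpoly (TMul s t) = abs_rpoly s * abs_rpoly t"
  by (simp_all add: zero_rpoly_def one_rpoly_def plus_rpoly.abs_eq times_rpoly.abs_eq)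

(* Monomials are sets of variables and products are unions.  This is the expansion of t in the
   ring only when t is multilinear, i.e. only multiplies factors with disjoint variables. *)
fun monomials :: "trm \<Rightarrow> nat set set" where
  "monomials (TVar i) = {{i}}"
| "monomials TZero = {}"
| "monomials TOne = {{}}"
| "monomials (TAdd s t) = (monomials s - monomials t) \<union> (monomials t - monomials s)"
| "monomials (TMul s t) = (\<lambda>(m, n). m \<union> n) ` (monomials s \<times> monomials t)"

fun multilinear :: "trm \<Rightarrow> bool" where
  "multilinear (TAdd s t) \<longleftrightarrow> multilinear s \<and> multilinear t"
| "multilinear (TMul s t) \<longleftrightarrow> multilinear s \<and> multilinear t \<and> vars s \<inter> vars t = {}"
| "multilinear _ \<longleftrightarrow> True"

lemma finite_vars[simp]: "finite (vars t)"
  by (induction t) auto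

lemma finite_monomials[simp]: "finite (monomials t)"
  by (induction t) auto

lemma monomials_subset_vars: "m \<in> monomials t \<Longrightarrow> m \<subseteq> vars t"
proof -
  have "\<forall>m\<in>monomials t. m \<subseteq> vars t" by (induction t) auto
  then show "m \<in> monomials t \<Longrightarrow> m \<subseteq> vars t" by blast
qed

lemma finite_monomial: "m \<in> monomials t \<Longrightarrow> finite m"
  by (meson monomials_subset_vars finite_vars finite_subset)

lemma sum_sym_diff_char2:
  fixes f :: "'b \<Rightarrow> 'a::comm_ring_1"
  assumes char2: "\<And>x::'a. x + x = 0" and "finite A" "finite B"
  shows "sum f ((A - B) \<union> (B - A)) = sum f A + sum f B"
proof -
  have "sum f A + sum f B = (sum f (A \<inter> B) + sum f (A \<inter> B)) + sum f (A - B) + sum f (B - A)"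
    using sum.Int_Diff[OF assms(2), of f B] sum.Int_Diff[OF assms(3), of f A]
    by (simp add: Int_commute algebra_simps)
  also have "\<dots> = sum f ((A - B) \<union> (B - A))"
    using assms by (simp add: sum.union_disjoint Diff_Int_distrib2)
  finally show ?thesis ..
qed

lemma sum_prod_mult_disjoint:
  fixes f :: "nat \<Rightarrow> 'a::comm_ring_1"
  assumes "finite M" "finite N" "\<And>m. m \<in> M \<Longrightarrow> m \<subseteq> A" "\<And>n. n \<in> N \<Longrightarrow> n \<subseteq> B"
    and "finite A" "finite B" "A \<inter> B = {}"
  shows "(\<Sum>m\<in>M. \<Prod>i\<in>m. f i) * (\<Sum>n\<in>N. \<Prod>i\<in>n. f i)
    = (\<Sum>u\<in>(\<lambda>(m, n). m \<union> n) ` (M \<times> N). \<Prod>i\<in>u. f i)"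
proof -
  let ?pr = "\<lambda>m. \<Prod>i\<in>m. f i"
  have "inj_on (\<lambda>(m, n). m \<union> n) (M \<times> N)"
  proof (rule inj_onI, clarify)
    fix m n m' n' assume "m \<in> M" "n \<in> N" "m' \<in> M" "n' \<in> N" "m \<union> n = m' \<union> n'"
    moreover from this have "m = (m \<union> n) \<inter> A" "m' = (m' \<union> n') \<inter> A"
      "n = (m \<union> n) \<inter> B" "n' = (m' \<union> n') \<inter> B"
      using assms(3,4,7) by blast+
    ultimately show "m = m' \<and> n = n'" by metis
  qed
  then have "(\<Sum>u\<in>(\<lambda>(m, n). m \<union> n) ` (M \<times> N). ?pr u) = (\<Sum>(m, n)\<in>M \<times> N. ?pr (m \<union> n))"
    by (simp add: sum.reindex case_prod_unfold)
  also have "\<dots> = (\<Sum>(m, n)\<in>M \<times> N. ?pr m * ?pr n)"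
  proof (rule sum.cong[OF HOL.refl], clarify)
    fix m n assume "m \<in> M" "n \<in> N"
    then have "m \<subseteq> A" "n \<subseteq> B" using assms by auto
    then show "?pr (m \<union> n) = ?pr m * ?pr n"
      using assms(5-7) by (intro prod.union_disjoint) (auto intro: finite_subset)
  qed
  also have "\<dots> = (\<Sum>m\<in>M. ?pr m) * (\<Sum>n\<in>N. ?pr n)"
    by (simp add: sum_product sum.cartesian_product)
  finally show ?thesis ..
qed

lemma hom_eq_sum_monomials:
  fixes I :: "trm \<Rightarrow> 'a::comm_ring_1"
  assumes char2: "\<And>x::'a. x + x = 0"
    and "I TZero = 0" "I TOne = 1" "\<And>s t. I (TAdd s t) = I s + I t" "\<And>s t. I (TMul s t) = I s * I t"
  shows "multilinear t \<Longrightarrow> I t = (\<Sum>m\<in>monomials t. \<Prod>i\<in>m. I (TVar i))"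
proof (induction t)
  case (TAdd s t)
  then show ?case using assms by (simp add: sum_sym_diff_char2[OF char2])
next
  case (TMul s t)
  then show ?case
    using assms monomials_subset_vars by (simp add: sum_prod_mult_disjoint[where A = "vars s" and B = "vars t"])
qed (use assms in simp_all)

lemma teval_multilinear: "multilinear t \<Longrightarrow> teval \<rho> t = (\<Sum>m\<in>monomials t. \<Prod>i\<in>m. \<rho> i)"
  using hom_eq_sum_monomials[where I = "teval \<rho>"] by simp

lemma abs_rpoly_multilinear:
  "multilinear t \<Longrightarrow> abs_rpoly t = (\<Sum>m\<in>monomials t. \<Prod>i\<in>m. abs_rpoly (TVar i))"
  by (rule hom_eq_sum_monomials) (auto simp: abs_rpoly_hom rpoly_add_self)

(* Evaluate both sides at the indicator function of a minimal element of the symmetric difference. *)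
lemma bit_polynomial_eq:
  fixes M N :: "nat set set"
  assumes "finite M" "\<forall>m\<in>M. finite m" "finite N" "\<forall>m\<in>N. finite m"
    and eq: "\<And>\<rho>. (\<Sum>m\<in>M. \<Prod>i\<in>m. \<rho> i) = (\<Sum>m\<in>N. \<Prod>i\<in>m. (\<rho> i :: bit))"
  shows "M = N"
proof (rule ccontr)
  assume "M \<noteq> N"
  define D where "D = (M - N) \<union> (N - M)"
  have fin: "finite D" "\<forall>m\<in>D. finite m" and "D \<noteq> {}"
    using assms \<open>M \<noteq> N\<close> by (auto simp: D_def)
  then obtain m0 where m0: "m0 \<in> D" "\<forall>m\<in>D. m \<le> m0 \<longrightarrow> m0 = m"
    using finite_has_minimal by blast
  define \<rho> :: "nat \<Rightarrow> bit" where "\<rho> i = (if i \<in> m0 then 1 else 0)" for i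
  have "(\<Sum>m\<in>D. \<Prod>i\<in>m. \<rho> i) = 0"
    using sum_sym_diff_char2[where f = "\<lambda>m. \<Prod>i\<in>m. \<rho> i", OF bit_add_self] assms eq[of \<rho>]
    unfolding D_def by simp
  moreover have "(\<Prod>i\<in>m. \<rho> i) = (if m \<subseteq> m0 then 1 else 0)" if "finite m" for m
    using that by (auto simp: \<rho>_def prod_zero_iff intro!: prod.neutral)
  then have "(\<Sum>m\<in>D. \<Prod>i\<in>m. \<rho> i) = (\<Sum>m\<in>D. if m = m0 then 1 else 0)"
    using fin m0 by (intro sum.cong HOL.refl) auto
  ultimately show False
    using m0 fin by simp
qed

theorem multilinear_ring_eq:
  assumes "multilinear t" "multilinear u" "\<And>\<rho>. teval \<rho> t = teval \<rho> u"
  shows "ring_eq t u"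
proof -
  have "monomials t = monomials u"
    using assms by (intro bit_polynomial_eq) (auto simp: finite_monomial teval_multilinear[symmetric])
  then have "abs_rpoly t = abs_rpoly u"
    by (simp only: abs_rpoly_multilinear assms)
  then show ?thesis by (simp only: rpoly.abs_eq_iff)
qed

section \<open>Safe circuits compute multilinear terms\<close>

(* inputs xs t is the set of input ports reaching a wire that carries t, when every variable i is
   reached from the ports xs ! i. *)
definition inputs :: "nat set list \<Rightarrow> trm \<Rightarrow> nat set" where
  "inputs xs t = (\<Union>i\<in>vars t. nth_default {} xs i)"

fun multilinear_wrt :: "nat set list \<Rightarrow> trm \<Rightarrow> bool" where
  "multilinear_wrt xs (TAdd s t) \<longleftrightarrow> multilinear_wrt xs s \<and> multilinear_wrt xs t"
| "multilinear_wrt xs (TMul s t) \<longleftrightarrow>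
    multilinear_wrt xs s \<and> multilinear_wrt xs t \<and> inputs xs s \<inter> inputs xs t = {}"
| "multilinear_wrt xs _ \<longleftrightarrow> True"

lemma inputs_simps[simp]:
  "inputs xs (TVar i) = nth_default {} xs i" "inputs xs TZero = {}" "inputs xs TOne = {}"
  "inputs xs (TAdd s t) = inputs xs s \<union> inputs xs t" "inputs xs (TMul s t) = inputs xs s \<union> inputs xs t"
  by (auto simp: inputs_def)

lemma inputs_subst: "inputs xs (subst ts u) = inputs (map (inputs xs) ts) u"
  by (induction u) (auto simp: nth_default_def)

lemma multilinear_wrt_subst:
  "multilinear_wrt (map (inputs xs) ts) u \<Longrightarrow> \<forall>t\<in>set ts. multilinear_wrt xs t \<Longrightarrow>
    multilinear_wrt xs (subst ts u)"
  by (induction u) (auto simp: inputs_subst)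

lemma inputs_take: "vars t \<subseteq> {..<a} \<Longrightarrow> inputs (take a xs) t = inputs xs t"
  by (induction t) (auto simp: nth_default_def)

lemma multilinear_wrt_take: "vars t \<subseteq> {..<a} \<Longrightarrow> multilinear_wrt (take a xs) t = multilinear_wrt xs t"
  by (induction t) (auto simp: inputs_take)

lemma inputs_drop: "a \<le> length xs \<Longrightarrow> inputs (drop a xs) t = inputs xs (shift a t)"
  by (induction t) (auto simp: nth_default_def)

lemma multilinear_wrt_drop:
  "a \<le> length xs \<Longrightarrow> multilinear_wrt (drop a xs) t = multilinear_wrt xs (shift a t)"
  by (induction t) (auto simp: inputs_drop)

lemma flow_terms:
  "wt c \<Longrightarrow> length xs = dm c \<Longrightarrow> snd (flow c xs) = map (inputs xs) (terms c) \<and>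
    (fst (flow c xs) \<longrightarrow> (\<forall>t\<in>set (terms c). multilinear_wrt xs t))"
proof (induction c arbitrary: xs)
  case (Gen g)
  then show ?case by (cases g) (auto simp: nth_default_def)
next
  case (Id n)
  then show ?case by (auto simp: nth_default_def intro!: nth_equalityI)
next
  case (Sym m n)
  then show ?case by (auto simp: nth_default_def nth_append intro!: nth_equalityI)
next
  case (Seq f g)
  obtain o1 ys where f: "flow f xs = (o1, ys)" by (cases "flow f xs")
  obtain o2 zs where g: "flow g ys = (o2, zs)" by (cases "flow g ys")
  have IHf: "ys = map (inputs xs) (terms f)" "o1 \<longrightarrow> (\<forall>t\<in>set (terms f). multilinear_wrt xs t)"
    using Seq.IH(1)[of xs] Seq.prems f by auto
  have "length ys = dm g"
    using IHf terms_typing[of f] Seq.prems by auto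
  then have IHg: "zs = map (inputs ys) (terms g)" "o2 \<longrightarrow> (\<forall>t\<in>set (terms g). multilinear_wrt ys t)"
    using Seq.IH(2)[of ys] Seq.prems g by auto
  show ?case
    using f g IHf IHg by (auto simp: inputs_subst intro: multilinear_wrt_subst)
next
  case (Par f g)
  let ?a = "dm f"
  obtain o1 ys where f: "flow f (take ?a xs) = (o1, ys)" by (cases "flow f (take ?a xs)")
  obtain o2 zs where g: "flow g (drop ?a xs) = (o2, zs)" by (cases "flow g (drop ?a xs)")
  have IHf: "ys = map (inputs (take ?a xs)) (terms f)"
      "o1 \<longrightarrow> (\<forall>t\<in>set (terms f). multilinear_wrt (take ?a xs) t)"
    using Par.IH(1)[of "take ?a xs"] Par.prems f by auto
  have IHg: "zs = map (inputs (drop ?a xs)) (terms g)"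
      "o2 \<longrightarrow> (\<forall>t\<in>set (terms g). multilinear_wrt (drop ?a xs) t)"
    using Par.IH(2)[of "drop ?a xs"] Par.prems g by auto
  have "\<forall>t\<in>set (terms f). vars t \<subseteq> {..<?a}" "?a \<le> length xs"
    using terms_typing[of f] Par.prems by auto
  then show ?case
    using f g IHf IHg by (auto simp: inputs_take multilinear_wrt_take inputs_drop multilinear_wrt_drop)
qed

lemma multilinear_wrt_singletons:
  "vars t \<subseteq> {..<a} \<Longrightarrow> multilinear_wrt (map (\<lambda>i. {i}) [0..<a]) t \<Longrightarrow> multilinear t"
proof (induction t)
  case (TMul s t)
  have "inputs (map (\<lambda>i. {i}) [0..<a]) s = vars s" "inputs (map (\<lambda>i. {i}) [0..<a]) t = vars t"
    using TMul.prems by (auto simp: inputs_def nth_default_def)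
  then show ?case using TMul by auto
qed auto

theorem safe_multilinear:
  assumes "wt c" "safe c" "t \<in> set (terms c)"
  shows "multilinear t"
proof -
  have "multilinear_wrt (map (\<lambda>i. {i}) [0..<dm c]) t"
    using flow_terms[OF assms(1), of "map (\<lambda>i. {i}) [0..<dm c]"] assms by (simp add: safe_def)
  then show ?thesis
    using terms_typing[OF assms(1)] assms(3) by (intro multilinear_wrt_singletons) auto
qed

theorem mainTheorem5:
  fixes c d :: circ and a b :: nat
  assumes "hasty c a b" and "hasty d a b"
    and "safe c" and "safe d"
    and "eqE c d"
  shows "eqA c d"
proof -
  have wt: "wt c" "wt d" and dm: "dm c = a" "dm d = a"
    using assms(1,2) by (auto simp: hasty_def)
  have len: "length (terms c) = b" "length (terms d) = b"
    using terms_typing wt assms(1,2) by (auto simp: hasty_def)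
  have "ring_eq (terms c ! j) (terms d ! j)" if "j < b" for j
  proof (rule multilinear_ring_eq)
    show "multilinear (terms c ! j)" "multilinear (terms d ! j)"
      using safe_multilinear wt assms(3,4) len \<open>j < b\<close> by auto
    show "teval \<rho> (terms c ! j) = teval \<rho> (terms d ! j)" for \<rho>
      using arg_cong[OF eqvE_den[OF assms(5)[unfolded eqE_def]], of "\<lambda>xs. xs ! j"] len \<open>j < b\<close>
      by (simp add: den_def)
  qed
  then have "tuple a (terms c) \<approx> tuple a (terms d)"
    using len by (intro tuple_cong list_all2_all_nthI ring_eq_sound) auto
  then have "c \<approx> d"
    using eqvA_tuple_terms wt dm by (metis eqv.sym eqv.trans)
  then show ?thesis by (simp add: eqA_def)
qed

end
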